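(* Let $(E,C)$ be a finite bipartite separated graph. If $(E,C)$ has the Linking Property, then $\theta^{(E,C)}$ is topologically transitive. If $\Omega(E,C)$ is a Cantor space (has no isolated points), the converse also holds.
   Context: Separated graph $(E,C)$: $E=(E^0,E^1,r,s)$, $C=\bigsqcup_vC_v$ with $C_v$ a partition of $r^{-1}(v)$ into non-empty sets; $X_e$ is the element of $C$ containing $e$. Finite bipartite: $E$ finite, $E^0=E^{0,0}\sqcup E^{0,1}$, $s(E^1)=E^{0,1}$, $r(E^1)=E^{0,0}$. Admissible paths: words $\sigma_m\cdots\sigma_1$ in $E^1\sqcup(E^1)^{-1}$ forming a path in the double graph ($e^{-1}$ goes from $r(e)$ to $s(e)$; paths are read right to left) with no subword $ef^{-1}$ with $e=f$ and no subword $e^{-1}f$ with $X_e=X_f$; vertices are trivial admissible paths. $\mathfrak t_d(\alpha)$ denotes the terminal (leftmost) letter of a non-trivial admissible path. Configuration space: $\mathbb F$ = free group on $E^1$; $\Omega(E,C)$ = set of $\xi\subseteq\mathbb F$ with $1\in\xi$, right-convex (if a reduced word $e_m^{\varepsilon_m}\cdots e_1^{\varepsilon_1}\in\xi$ then $e_k^{\varepsilon_k}\cdots e_1^{\varepsilon_1}\in\xi$ for $k<m$), and such that for every $\alpha\in\xi$ the set $\xi_\alpha=\{\sigma:\sigma\alpha\in\xi\}$ equals $s^{-1}(v)$ for some $v\in E^{0,1}$ or $\{e_X^{-1}:X\in C_v\}$ for some $v\in E^{0,0}$, $e_X\in X$; topology from $\{0,1\}^{\mathbb F}$; $\theta^{(E,C)}$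 has domains $\Omega(E,C)_\alpha=\{\xi:\alpha^{-1}\in\xi\}$ and $\theta_\alpha(\xi)=\xi\alpha^{-1}$. Balls: for $n\ge1$, $\xi^n=\{\alpha\in\xi:|\alpha|\le n\}$, $\mathcal B_n(\Omega(E,C))=\{\xi^n:\xi\in\Omega(E,C)\}$, $\mathcal B(\Omega(E,C))=\bigcup_{n\ge1}\mathcal B_n$. The boundary of a ball $B$ is $\partial B=\{\mathfrak t_d(\alpha):\alpha\in B\text{ maximal}\}$, where $\alpha\in B$ is maximal if there is no $\sigma$ with $\sigma\alpha\in B$ and $|\sigma\alpha|>|\alpha|$. Two sets $A,A'\subseteq E^1\cup(E^1)^{-1}$ can be linked if there are $\sigma\in A$, $\sigma'\in A'$ and an admissible path $\alpha$ (possibly trivial) such that the concatenation $\sigma^{-1}\alpha\sigma'$ (without cancellation) is an admissible path. $(E,C)$ has the Linking Property if $\partial B$ and $\partial B'$ can be linked for any two balls $B,B'\in\mathcal B(\Omega(E,C))$. A partial action $\theta\colon G\curvearrowright\Omega$ (with $\Omega_g$ the domain of $\theta_{g^{-1}}$) is topologically transitive if for any non-empty open $U,U'\subseteq\Omega$ there is $g\in G$ with $\theta_g(U\cap\Omega_{g^{-1}})\cap U'\ne\emptyset$. *)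

theory Defs
  imports "HOL-Analysis.Analysis"
begin

text \<open>A letter is an edge together with an orientation: (e, True) is e, (e, False) is e^-1.
  A word sigma_m ... sigma_1 is stored as the list [sigma_m, ..., sigma_1]
  (head = leftmost letter).\<close>

type_synonym 'e letter = "'e \<times> bool"
type_synonym 'e word = "'e letter list"

record ('v, 'e) sep_graph =
  V00 :: "'v set"
  V01 :: "'v set"
  Edges :: "'e set"
  rg :: "'e \<Rightarrow> 'v"
  sr :: "'e \<Rightarrow> 'v"
  Cs :: "'v \<Rightarrow> 'e set set"

definition Verts :: "('v, 'e) sep_graph \<Rightarrow> 'v set" where
  "Verts G = V00 G \<union> V01 G"

definition separated_graph :: "('v, 'e) sep_graph \<Rightarrow> bool" where
  "separated_graph G \<longleftrightarrow>
     rg G ` Edges G \<subseteq> Verts G \<and> sr G ` Edges G \<subseteq> Verts G \<and>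
     (\<forall>v \<in> Verts G.
        (\<forall>X \<in> Cs G v. X \<noteq> {}) \<and>
        \<Union>(Cs G v) = {e \<in> Edges G. rg G e = v} \<and>
        (\<forall>X \<in> Cs G v. \<forall>Y \<in> Cs G v. X \<noteq> Y \<longrightarrow> X \<inter> Y = {}))"

definition finite_bipartite :: "('v, 'e) sep_graph \<Rightarrow> bool" where
  "finite_bipartite G \<longleftrightarrow>
     separated_graph G \<and> finite (Verts G) \<and> finite (Edges G) \<and>
     V00 G \<inter> V01 G = {} \<and>
     sr G ` Edges G = V01 G \<and> rg G ` Edges G = V00 G"

definition Xof :: "('v, 'e) sep_graph \<Rightarrow> 'e \<Rightarrow> 'e set" where
  "Xof G e = (THE X. X \<in> Cs G (rg G e) \<and> e \<in> X)"

definition letters :: "('v, 'e) sep_graph \<Rightarrow> 'e letter set" where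
  "letters G = Edges G \<times> UNIV"

definition linv :: "'e letter \<Rightarrow> 'e letter" where
  "linv x = (fst x, \<not> snd x)"

definition winv :: "'e word \<Rightarrow> 'e word" where
  "winv w = rev (map linv w)"

fun red :: "'e word \<Rightarrow> 'e word" where
  "red [] = []"
| "red (x # xs) = (case red xs of [] \<Rightarrow> [x]
                     | y # ys \<Rightarrow> (if y = linv x then ys else x # y # ys))"

definition reduced :: "'e word \<Rightarrow> bool" where
  "reduced w \<longleftrightarrow> (\<forall>i. Suc i < length w \<longrightarrow> w ! Suc i \<noteq> linv (w ! i))"

definition wmult :: "'e word \<Rightarrow> 'e word \<Rightarrow> 'e word" where
  "wmult u v = red (u @ v)"

definition FG :: "('v, 'e) sep_graph \<Rightarrow> 'e word set" where
  "FG G = {w. set w \<subseteq> letters G \<and> reduced w}"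

definition xi_at :: "('v, 'e) sep_graph \<Rightarrow> 'e word set \<Rightarrow> 'e word \<Rightarrow> 'e letter set" where
  "xi_at G \<xi> \<alpha> = {\<sigma> \<in> letters G. wmult [\<sigma>] \<alpha> \<in> \<xi>}"

definition local_ok :: "('v, 'e) sep_graph \<Rightarrow> 'e letter set \<Rightarrow> bool" where
  "local_ok G A \<longleftrightarrow>
     (\<exists>v \<in> V01 G. A = {(e, True) | e. e \<in> Edges G \<and> sr G e = v}) \<or>
     (\<exists>v \<in> V00 G. \<exists>ch. (\<forall>X \<in> Cs G v. ch X \<in> X) \<and> A = (\<lambda>X. (ch X, False)) ` Cs G v)"

definition Omega :: "('v, 'e) sep_graph \<Rightarrow> 'e word set set" where
  "Omega G = {\<xi>. \<xi> \<subseteq> FG G \<and> [] \<in> \<xi> \<and>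
                 (\<forall>w \<in> \<xi>. \<forall>k. drop k w \<in> \<xi>) \<and>
                 (\<forall>\<alpha> \<in> \<xi>. local_ok G (xi_at G \<xi> \<alpha>))}"

text \<open>Topology induced from {0,1}^F (product of discrete spaces), via the identification
  of a subset of F with its characteristic function.\<close>
definition Omega_top :: "('v, 'e) sep_graph \<Rightarrow> 'e word set topology" where
  "Omega_top G = pullback_topology (Omega G) (\<lambda>\<xi>. restrict (\<lambda>w. w \<in> \<xi>) (FG G))
                   (product_topology (\<lambda>_. discrete_topology (UNIV :: bool set)) (FG G))"

text \<open>Partial action: Omega_g = {xi. g^-1 in xi} (the domain of theta_{g^-1}),
  theta_g(xi) = xi g^-1.\<close>
definition Omega_dom :: "('v, 'e) sep_graph \<Rightarrow> 'e word \<Rightarrow> 'e word set set" where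
  "Omega_dom G g = {\<xi> \<in> Omega G. winv g \<in> \<xi>}"

definition theta :: "'e word \<Rightarrow> 'e word set \<Rightarrow> 'e word set" where
  "theta g \<xi> = (\<lambda>\<beta>. wmult \<beta> (winv g)) ` \<xi>"

text \<open>Topological transitivity of a partial action of a group (carrier Grp, inversion ginv)
  on a space T, where dm g is the domain of act (ginv g).\<close>
definition top_transitive ::
  "'a topology \<Rightarrow> 'g set \<Rightarrow> ('g \<Rightarrow> 'g) \<Rightarrow> ('g \<Rightarrow> 'a set) \<Rightarrow> ('g \<Rightarrow> 'a \<Rightarrow> 'a) \<Rightarrow> bool" where
  "top_transitive T Grp ginv dm act \<longleftrightarrow>
     (\<forall>U U'. openin T U \<longrightarrow> openin T U' \<longrightarrow> U \<noteq> {} \<longrightarrow> U' \<noteq> {} \<longrightarrow>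
        (\<exists>g \<in> Grp. act g ` (U \<inter> dm (ginv g)) \<inter> U' \<noteq> {}))"

definition theta_top_transitive :: "('v, 'e) sep_graph \<Rightarrow> bool" where
  "theta_top_transitive G \<longleftrightarrow> top_transitive (Omega_top G) (FG G) winv (Omega_dom G) theta"

definition no_isolated_points :: "'a topology \<Rightarrow> bool" where
  "no_isolated_points T \<longleftrightarrow> (\<forall>x \<in> topspace T. \<not> openin T {x})"

definition lsrc :: "('v, 'e) sep_graph \<Rightarrow> 'e letter \<Rightarrow> 'v" where
  "lsrc G x = (if snd x then sr G (fst x) else rg G (fst x))"

definition ltgt :: "('v, 'e) sep_graph \<Rightarrow> 'e letter \<Rightarrow> 'v" where
  "ltgt G x = (if snd x then rg G (fst x) else sr G (fst x))"

text \<open>Condition on an adjacent pair x y (x immediately to the left of y, i.e. the path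
  traverses y then x).\<close>
definition adm_pair :: "('v, 'e) sep_graph \<Rightarrow> 'e letter \<Rightarrow> 'e letter \<Rightarrow> bool" where
  "adm_pair G x y \<longleftrightarrow>
     lsrc G x = ltgt G y \<and>
     \<not> (snd x \<and> \<not> snd y \<and> fst x = fst y) \<and>
     \<not> (\<not> snd x \<and> snd y \<and> Xof G (fst x) = Xof G (fst y))"

text \<open>Non-trivial admissible paths (non-empty words). Trivial admissible paths are vertices.\<close>
definition admissible :: "('v, 'e) sep_graph \<Rightarrow> 'e word \<Rightarrow> bool" where
  "admissible G w \<longleftrightarrow> w \<noteq> [] \<and> set w \<subseteq> letters G \<and>
     (\<forall>i. Suc i < length w \<longrightarrow> adm_pair G (w ! i) (w ! Suc i))"

definition ball_n :: "nat \<Rightarrow> 'e word set \<Rightarrow> 'e word set" where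
  "ball_n n \<xi> = {\<alpha> \<in> \<xi>. length \<alpha> \<le> n}"

definition balls :: "('v, 'e) sep_graph \<Rightarrow> 'e word set set" where
  "balls G = {ball_n n \<xi> | n \<xi>. n \<ge> 1 \<and> \<xi> \<in> Omega G}"

definition maximal_in :: "('v, 'e) sep_graph \<Rightarrow> 'e word set \<Rightarrow> 'e word \<Rightarrow> bool" where
  "maximal_in G B \<alpha> \<longleftrightarrow> \<alpha> \<in> B \<and>
     \<not> (\<exists>\<sigma> \<in> letters G. wmult [\<sigma>] \<alpha> \<in> B \<and> length (wmult [\<sigma>] \<alpha>) > length \<alpha>)"

definition boundary :: "('v, 'e) sep_graph \<Rightarrow> 'e word set \<Rightarrow> 'e letter set" where
  "boundary G B = {hd \<alpha> | \<alpha>. maximal_in G B \<alpha> \<and> \<alpha> \<noteq> []}"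

definition can_be_linked :: "('v, 'e) sep_graph \<Rightarrow> 'e letter set \<Rightarrow> 'e letter set \<Rightarrow> bool" where
  "can_be_linked G A A' \<longleftrightarrow>
     (\<exists>\<sigma> \<in> A. \<exists>\<sigma>' \<in> A'. \<exists>\<alpha>. (\<alpha> = [] \<or> admissible G \<alpha>) \<and>
        admissible G ([linv \<sigma>] @ \<alpha> @ [\<sigma>']))"

definition linking_property :: "('v, 'e) sep_graph \<Rightarrow> bool" where
  "linking_property G \<longleftrightarrow>
     (\<forall>B \<in> balls G. \<forall>B' \<in> balls G. can_be_linked G (boundary G B) (boundary G B'))"

end

theory Submission
  imports Defs
begin

text \<open>Linking Property \<open>\<Rightarrow>\<close> transitivity: given two basic open sets, fixed by balls \<open>B\<close> and
  \<open>B'\<close>, a link \<open>\<sigma>\<^sup>-\<^sup>1 \<alpha> \<sigma>'\<close> between maximal words \<open>\<beta> \<in> B\<close>, \<open>\<beta>' \<in> B'\<close> allows one to glue \<open>B'\<close>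
  and the translate of \<open>B\<close> by \<open>\<beta>\<^sup>-\<^sup>1 \<alpha> \<beta>'\<close> into one partial configuration. Every word of it
  sees a set of letters that is contained in an admissible local configuration, and such a
  partial configuration always extends to a point of \<open>\<Omega>(E,C)\<close>; that point lies in the open set
  of \<open>B'\<close> and is the image of a point of the open set of \<open>B\<close>.

  Transitivity \<open>\<Rightarrow>\<close> Linking Property: for balls \<open>B = \<xi>\<^sup>n\<close> and \<open>B' = \<xi>'\<^sup>m\<close>, the finitely many
  translates of \<open>\<xi>\<close> by words shorter than \<open>m + n\<close> can be avoided by a point \<open>\<xi>\<^sub>1\<close> near \<open>\<xi>'\<close>,
  because \<open>\<xi>'\<close> is not isolated. Transitivity applied to small neighbourhoods of \<open>\<xi>\<close> and
  \<open>\<xi>\<^sub>1\<close> then yields an orbit word \<open>g\<close> of length at least \<open>m + n\<close>, and the middle part of the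
  admissible path \<open>g\<close> links the boundaries of \<open>B\<close> and \<open>B'\<close>.\<close>

lemma linv_linv [simp]: "linv (linv x) = x" by (simp add: linv_def)
lemma linv_inject [simp]: "(linv x = linv y) = (x = y)" by (metis linv_linv)
lemma fst_linv [simp]: "fst (linv x) = fst x" and snd_linv [simp]: "snd (linv x) = (\<not> snd x)"
  by (auto simp: linv_def)

lemma winv_Nil [simp]: "winv [] = []" by (simp add: winv_def)
lemma winv_Cons [simp]: "winv (x # w) = winv w @ [linv x]" by (simp add: winv_def)
lemma winv_append [simp]: "winv (u @ v) = winv v @ winv u" by (simp add: winv_def)
lemma winv_winv [simp]: "winv (winv w) = w" by (simp add: winv_def rev_map comp_def)
lemma length_winv [simp]: "length (winv w) = length w" by (simp add: winv_def)
lemma winv_eq_Nil_iff [simp]: "(winv w = []) = (w = [])" by (simp add: winv_def)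
lemma set_winv: "set (winv w) = linv ` set w" by (simp add: winv_def)
lemma hd_winv: "w \<noteq> [] \<Longrightarrow> hd (winv w) = linv (last w)"
  by (simp add: winv_def hd_rev last_map)
lemma last_winv: "w \<noteq> [] \<Longrightarrow> last (winv w) = linv (hd w)"
  by (simp add: winv_def last_rev hd_map)

lemma winv_take_eq_drop_winv: "winv (take j w) = drop (length w - j) (winv w)"
proof -
  have "winv w = winv (drop j w) @ winv (take j w)" by (metis append_take_drop_id winv_append)
  then show ?thesis by (metis append_eq_conv_conj length_drop length_winv)
qed

lemma reduced_Nil [simp]: "reduced []" by (simp add: reduced_def)

lemma reduced_Cons: "reduced (x # xs) \<longleftrightarrow> reduced xs \<and> (xs = [] \<or> hd xs \<noteq> linv x)"
  unfolding reduced_def by (cases xs) (auto simp: nth_Cons split: nat.splits)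

lemma reduced_append:
  "reduced (u @ v) \<longleftrightarrow> reduced u \<and> reduced v \<and> (u = [] \<or> v = [] \<or> hd v \<noteq> linv (last u))"
  by (induction u) (auto simp: reduced_Cons)

lemma reduced_drop: "reduced w \<Longrightarrow> reduced (drop k w)"
  by (metis append_take_drop_id reduced_append)

lemma reduced_take: "reduced w \<Longrightarrow> reduced (take k w)"
  by (metis append_take_drop_id reduced_append)

lemma reduced_winv [simp]: "reduced (winv w) = reduced w"
  by (induction w) (auto simp: reduced_append reduced_Cons last_winv)

lemma reduced_join: "reduced (u @ [x]) \<Longrightarrow> reduced (x # v) \<Longrightarrow> reduced (u @ x # v)"
  by (auto simp: reduced_append reduced_Cons)

definition cancel_cons :: "'e letter \<Rightarrow> 'e word \<Rightarrow> 'e word" where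
  "cancel_cons x w = (case w of [] \<Rightarrow> [x] | y # ys \<Rightarrow> (if y = linv x then ys else x # y # ys))"

lemma red_Cons_cancel_cons: "red (x # xs) = cancel_cons x (red xs)"
  by (simp add: cancel_cons_def)

declare red.simps(2) [simp del]

lemma reduced_cancel_cons: "reduced w \<Longrightarrow> reduced (cancel_cons x w)"
  by (auto simp: cancel_cons_def reduced_Cons split: list.splits)

lemma red_reduced [simp]: "reduced (red w)"
  by (induction w) (auto simp: red_Cons_cancel_cons reduced_cancel_cons)

lemma cancel_cons_reduced_Cons: "reduced (x # w) \<Longrightarrow> cancel_cons x w = x # w"
  by (auto simp: cancel_cons_def reduced_Cons split: list.splits)

lemma red_id: "reduced w \<Longrightarrow> red w = w"
  by (induction w)
    (auto simp: red_Cons_cancel_cons reduced_Cons cancel_cons_reduced_Cons cancel_cons_def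
      split: list.splits)

lemma set_cancel_cons: "set (cancel_cons x w) \<subseteq> insert x (set w)"
  by (auto simp: cancel_cons_def split: list.splits)

lemma set_red: "set (red w) \<subseteq> set w"
  by (induction w) (auto simp: red_Cons_cancel_cons dest!: set_mp[OF set_cancel_cons])

lemma length_cancel_cons: "length (cancel_cons x w) \<le> Suc (length w)"
  by (auto simp: cancel_cons_def split: list.splits)

lemma length_red_le: "length (red w) \<le> length w"
  by (induction w) (auto simp: red_Cons_cancel_cons intro: order_trans[OF length_cancel_cons])

lemma cancel_cons_linv: "reduced w \<Longrightarrow> cancel_cons x (cancel_cons (linv x) w) = w"
  by (auto simp: cancel_cons_def reduced_Cons split: list.splits)

lemma cancel_cons_inverse_hd: "w \<noteq> [] \<Longrightarrow> cancel_cons (linv (hd w)) w = tl w"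
  by (cases w) (auto simp: cancel_cons_def)

lemma cancel_cons_cases:
  "reduced y \<Longrightarrow> (y \<noteq> [] \<and> x = linv (hd y) \<and> cancel_cons x y = tl y) \<or>
     (cancel_cons x y = x # y \<and> (y = [] \<or> x \<noteq> linv (hd y)))"
  by (cases y) (auto simp: cancel_cons_def)

lemma red_append_red_right: "red (xs @ red ys) = red (xs @ ys)"
  by (induction xs) (auto simp: red_Cons_cancel_cons red_id)

lemma red_cancel_cons_append:
  assumes "reduced w"
  shows "red (cancel_cons x w @ ys) = cancel_cons x (red (w @ ys))"
proof (cases "w \<noteq> [] \<and> hd w = linv x")
  case True
  then obtain w' where w: "w = linv x # w'" by (cases w) auto
  then have "cancel_cons x w = w'" by (simp add: cancel_cons_def)
  moreover have "cancel_cons x (red (w @ ys)) = red (w' @ ys)"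
    using w by (simp add: red_Cons_cancel_cons cancel_cons_linv)
  ultimately show ?thesis by simp
next
  case False
  then have "cancel_cons x w = x # w" by (auto simp: cancel_cons_def split: list.splits)
  then show ?thesis by (simp add: red_Cons_cancel_cons)
qed

lemma red_append_red_left: "red (red xs @ ys) = red (xs @ ys)"
  by (induction xs) (auto simp: red_Cons_cancel_cons red_cancel_cons_append red_id)

lemma red_cancel: "red (w @ winv w @ ys) = red ys"
proof (induction w arbitrary: ys)
  case (Cons x w)
  have "red ((x # w) @ winv (x # w) @ ys) = cancel_cons x (red (w @ winv w @ (linv x # ys)))"
    by (simp add: red_Cons_cancel_cons)
  also have "\<dots> = cancel_cons x (cancel_cons (linv x) (red ys))"
    using Cons by (simp add: red_Cons_cancel_cons)
  also have "\<dots> = red ys" by (simp add: cancel_cons_linv)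
  finally show ?case .
qed simp

lemma red_cancel': "red (winv w @ w @ ys) = red ys"
  using red_cancel[of "winv w"] by simp

lemma red_cancel_right: "red (u @ h @ winv h) = red u"
  by (metis append_Nil2 red_append_red_right red_cancel red.simps(1))

lemma red_cancel_right': "red (u @ winv h @ h) = red u"
  using red_cancel_right[of u "winv h"] by simp

lemma red_mid_cancel: "red (a @ c @ winv c @ v) = red (a @ v)"
  by (metis red_append_red_right red_cancel)

lemma red_Cons_reduced: "reduced y \<Longrightarrow> red (x # y) = cancel_cons x y"
  by (simp add: red_Cons_cancel_cons red_id)

lemma red_Cons_red: "red (x # red ys) = red (x # ys)"
  by (simp add: red_Cons_cancel_cons red_id)

lemma red_drop_winv: "reduced w \<Longrightarrow> red (drop i w @ winv w) = winv (take i w)"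
  by (metis append_take_drop_id red_cancel red_id reduced_take reduced_winv winv_append
      self_append_conv2 red.simps(1))

lemma red_append_decomp:
  assumes "reduced u" "reduced v"
  shows "\<exists>u1 c v1. u = u1 @ c \<and> v = winv c @ v1 \<and> red (u @ v) = u1 @ v1"
  using assms(1)
proof (induction u)
  case Nil
  then show ?case using assms(2) by (metis append_Nil red_id winv_Nil)
next
  case (Cons x u)
  then obtain u1 c v1 where h: "u = u1 @ c" "v = winv c @ v1" "red (u @ v) = u1 @ v1"
    using reduced_Cons by blast
  have red_xuv: "red ((x # u) @ v) = cancel_cons x (u1 @ v1)"
    using h(3) by (simp add: red_Cons_cancel_cons)
  consider (keep) "u1 \<noteq> []" | (cancel) "u1 = []" "v1 \<noteq> []" "hd v1 = linv x"
    | (new) "u1 = []" "v1 = [] \<or> hd v1 \<noteq> linv x" by blast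
  then show ?case
  proof cases
    case keep
    then have "hd (u1 @ v1) \<noteq> linv x" using Cons.prems h(1) by (auto simp: reduced_Cons)
    then have "red ((x # u) @ v) = (x # u1) @ v1"
      using red_xuv keep by (cases u1) (auto simp: cancel_cons_def)
    then show ?thesis using h by (metis append_Cons)
  next
    case cancel
    then obtain v1' where v1: "v1 = linv x # v1'" by (cases v1) auto
    then have "red ((x # u) @ v) = v1'" using red_xuv cancel by (simp add: cancel_cons_def)
    then show ?thesis using h cancel v1 by (metis append_Nil append_Cons winv_Cons append_assoc)
  next
    case new
    then have "red ((x # u) @ v) = x # v1" using red_xuv by (cases v1) (auto simp: cancel_cons_def)
    then show ?thesis using h new by (metis append_Cons append_Nil)
  qed
qed

lemma drop_red_append:
  assumes "reduced y" "reduced h"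
  shows "(\<exists>j. drop k (red (y @ h)) = red (drop j y @ h)) \<or> (\<exists>j. drop k (red (y @ h)) = drop j h)"
proof -
  obtain u1 c v1 where h: "y = u1 @ c" "h = winv c @ v1" "red (y @ h) = u1 @ v1"
    using red_append_decomp[OF assms] by blast
  have r: "reduced (u1 @ v1)" using h(3) by (metis red_reduced)
  show ?thesis
  proof (cases "k \<le> length u1")
    case True
    have "drop k (red (y @ h)) = drop k u1 @ v1" using h(3) True by simp
    moreover have "red (drop k y @ h) = red (drop k u1 @ v1)"
      using h True by (simp add: red_mid_cancel)
    moreover have "reduced (drop k u1 @ v1)" using reduced_drop[OF r, of k] True by simp
    ultimately show ?thesis by (metis red_id)
  next
    case False
    then have "drop k (red (y @ h)) = drop (k - length u1 + length c) h" using h by simp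
    then show ?thesis by blast
  qed
qed

lemma red_append_winv_last:
  assumes "reduced y" "reduced b" "b \<noteq> []" "length y \<le> length b"
  shows "red (y @ winv b) = [] \<or> last (red (y @ winv b)) = linv (hd b)"
proof -
  obtain u1 c v1 where h: "y = u1 @ c" "winv b = winv c @ v1" "red (y @ winv b) = u1 @ v1"
    using red_append_decomp[of y "winv b"] assms by auto
  have b: "b = winv v1 @ c" using h(2) by (metis winv_append winv_winv)
  show ?thesis
  proof (cases "v1 = []")
    case True
    then have "u1 = []" using assms(4) h(1) b by simp
    then show ?thesis using h True by simp
  next
    case False
    then show ?thesis using h b by (simp add: hd_winv last_winv)
  qed
qed

definition rtrans :: "'e word set \<Rightarrow> 'e word \<Rightarrow> 'e word set" where
  "rtrans A h = (\<lambda>b. red (b @ h)) ` A"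

lemma theta_rtrans: "theta g \<xi> = rtrans \<xi> (winv g)"
  by (simp add: theta_def rtrans_def wmult_def)

lemma red_mem_rtrans: "b \<in> A \<Longrightarrow> red (b @ h) \<in> rtrans A h"
  by (simp add: rtrans_def)

lemma mem_rtrans:
  assumes "\<forall>b\<in>A. reduced b"
  shows "y \<in> rtrans A h \<longleftrightarrow> reduced y \<and> red (y @ winv h) \<in> A"
proof
  assume "y \<in> rtrans A h"
  then obtain b where b: "b \<in> A" "y = red (b @ h)" by (auto simp: rtrans_def)
  have "red (y @ winv h) = red (b @ h @ winv h)" using b by (simp add: red_append_red_left)
  also have "\<dots> = b" using assms b by (simp add: red_cancel_right red_id)
  finally show "reduced y \<and> red (y @ winv h) \<in> A" using b by simp
next
  assume y: "reduced y \<and> red (y @ winv h) \<in> A"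
  have "red (red (y @ winv h) @ h) = y"
    using y by (simp add: red_append_red_left red_cancel_right' red_id)
  then show "y \<in> rtrans A h" using y red_mem_rtrans by metis
qed

lemma rtrans_rtrans: "\<forall>b\<in>A. reduced b \<Longrightarrow> rtrans (rtrans A h) (winv h) = A"
  unfolding rtrans_def image_image
  by (simp add: red_append_red_left red_cancel_right red_id)

lemma letters_iff: "x \<in> letters G \<longleftrightarrow> fst x \<in> Edges G"
  by (cases x) (auto simp: letters_def)

lemma linv_mem_letters [simp]: "linv x \<in> letters G \<longleftrightarrow> x \<in> letters G"
  by (simp add: letters_iff)

lemma adm_pair_not_linv: "adm_pair G x y \<Longrightarrow> y \<noteq> linv x"
  by (auto simp: adm_pair_def linv_def)

lemma adm_pair_linv: "adm_pair G x y = adm_pair G (linv y) (linv x)"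
  by (auto simp: adm_pair_def lsrc_def ltgt_def linv_def)

lemma admissible_reduced: "admissible G w \<Longrightarrow> reduced w"
  unfolding admissible_def reduced_def using adm_pair_not_linv by blast

lemma admissible_letters: "admissible G w \<Longrightarrow> set w \<subseteq> letters G"
  unfolding admissible_def by blast

lemma admissible_nth: "admissible G w \<Longrightarrow> Suc i < length w \<Longrightarrow> adm_pair G (w ! i) (w ! Suc i)"
  unfolding admissible_def by blast

lemma admissible_winv:
  assumes "admissible G w"
  shows "admissible G (winv w)"
  unfolding admissible_def
proof (intro conjI allI impI)
  show "winv w \<noteq> []" using assms by (simp add: admissible_def)
  show "set (winv w) \<subseteq> letters G" using admissible_letters[OF assms] by (auto simp: set_winv)
  fix i assume i: "Suc i < length (winv w)"
  define j where "j = length w - Suc (Suc i)"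
  have "adm_pair G (w ! j) (w ! Suc j)" using admissible_nth[OF assms] i by (simp add: j_def)
  moreover have "winv w ! i = linv (w ! Suc j)" "winv w ! Suc i = linv (w ! j)"
    using i by (simp_all add: j_def winv_def rev_nth Suc_diff_Suc)
  ultimately show "adm_pair G (winv w ! i) (winv w ! Suc i)" using adm_pair_linv by metis
qed

lemma admissible_take_drop:
  assumes "admissible G w" "0 < c" "i + c \<le> length w"
  shows "admissible G (take c (drop i w))"
  unfolding admissible_def
proof (intro conjI allI impI)
  show "take c (drop i w) \<noteq> []" using assms by simp
  show "set (take c (drop i w)) \<subseteq> letters G"
    using admissible_letters[OF assms(1)] set_take_subset set_drop_subset by fastforce
  fix j assume j: "Suc j < length (take c (drop i w))"
  then have "Suc (i + j) < length w" by (simp; arith)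
  then have "adm_pair G (w ! (i + j)) (w ! Suc (i + j))" using admissible_nth[OF assms(1)] by blast
  then show "adm_pair G (take c (drop i w) ! j) (take c (drop i w) ! Suc j)"
    using j assms(3) by (simp add: nth_drop)
qed

lemma FG_iff: "w \<in> FG G \<longleftrightarrow> set w \<subseteq> letters G \<and> reduced w"
  by (simp add: FG_def)

lemma wmult_single: "reduced y \<Longrightarrow> wmult [x] y = cancel_cons x y"
  by (simp add: wmult_def red_Cons_reduced)

lemma wmult_cases:
  assumes "reduced z"
  obtains "z \<noteq> []" "\<tau> = linv (hd z)" "wmult [\<tau>] z = tl z"
        | "wmult [\<tau>] z = \<tau> # z"
  using cancel_cons_cases[OF assms, of \<tau>] assms by (auto simp: wmult_single)

lemma length_wmult: "reduced y \<Longrightarrow> length (wmult [\<tau>] y) \<le> Suc (length y)"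
  by (simp add: wmult_single length_cancel_cons)

lemma xi_at_iff: "\<sigma> \<in> xi_at G A y \<longleftrightarrow> \<sigma> \<in> letters G \<and> wmult [\<sigma>] y \<in> A"
  by (simp add: xi_at_def)

lemma xi_at_mono: "A \<subseteq> B \<Longrightarrow> xi_at G A y \<subseteq> xi_at G B y"
  by (auto simp: xi_at_def)

lemma Omega_FG: "\<xi> \<in> Omega G \<Longrightarrow> \<xi> \<subseteq> FG G" by (simp add: Omega_def)
lemma Omega_Nil: "\<xi> \<in> Omega G \<Longrightarrow> [] \<in> \<xi>" by (simp add: Omega_def)
lemma Omega_drop: "\<xi> \<in> Omega G \<Longrightarrow> w \<in> \<xi> \<Longrightarrow> drop k w \<in> \<xi>" by (simp add: Omega_def)
lemma Omega_local: "\<xi> \<in> Omega G \<Longrightarrow> w \<in> \<xi> \<Longrightarrow> local_ok G (xi_at G \<xi> w)" by (simp add: Omega_def)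
lemma Omega_reduced: "\<xi> \<in> Omega G \<Longrightarrow> w \<in> \<xi> \<Longrightarrow> reduced w" by (metis FG_iff Omega_FG subsetD)
lemma Omega_letters: "\<xi> \<in> Omega G \<Longrightarrow> w \<in> \<xi> \<Longrightarrow> set w \<subseteq> letters G" by (metis FG_iff Omega_FG subsetD)

lemma xi_at_inverse_hd:
  assumes "S \<subseteq> FG G" "\<And>k. drop k y \<in> S" "y \<in> S" "y \<noteq> []"
  shows "linv (hd y) \<in> xi_at G S y"
proof -
  have "y \<in> FG G" using assms(1,3) by blast
  then have "reduced y" "set y \<subseteq> letters G" by (simp_all add: FG_iff)
  then have "hd y \<in> letters G" using assms(4) by auto
  moreover have "wmult [linv (hd y)] y = drop 1 y"
    using \<open>reduced y\<close> by (simp add: wmult_single cancel_cons_inverse_hd assms(4) drop_Suc)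
  ultimately show ?thesis using assms(2) \<open>hd y \<in> letters G\<close> by (simp add: xi_at_iff)
qed

lemma Omega_xi_at_inverse_hd:
  "\<xi> \<in> Omega G \<Longrightarrow> y \<in> \<xi> \<Longrightarrow> y \<noteq> [] \<Longrightarrow> linv (hd y) \<in> xi_at G \<xi> y"
  by (rule xi_at_inverse_hd[OF Omega_FG]) (auto intro: Omega_drop)

lemma xi_at_Cons:
  assumes "\<xi> \<in> Omega G" "x # y \<in> \<xi>"
  shows "x \<in> xi_at G \<xi> y"
proof -
  have "reduced (x # y)" using Omega_reduced assms by blast
  then have "wmult [x] y = x # y" by (simp add: wmult_single cancel_cons_reduced_Cons reduced_Cons)
  moreover have "x \<in> letters G" using Omega_letters[OF assms] by auto
  ultimately show ?thesis using assms by (simp add: xi_at_iff)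
qed

lemma mem_ball_n: "y \<in> ball_n n \<xi> \<longleftrightarrow> y \<in> \<xi> \<and> length y \<le> n"
  by (simp add: ball_n_def)

lemma ball_n_eq_mem: "ball_n K a = ball_n K b \<Longrightarrow> length w \<le> K \<Longrightarrow> (w \<in> a) = (w \<in> b)"
  unfolding ball_n_def by blast

lemma ball_n_eq_mono: "k \<le> K \<Longrightarrow> ball_n K a = ball_n K b \<Longrightarrow> ball_n k a = ball_n k b"
  unfolding ball_n_def by (smt (verit) Collect_cong mem_Collect_eq order_trans)

lemma ball_n_eqI:
  assumes zeta: "\<zeta> \<in> Omega G" and xi: "\<xi> \<in> Omega G"
    and sub: "ball_n n \<xi> \<subseteq> \<zeta>"
    and loc: "\<And>y. y \<in> ball_n n \<xi> \<Longrightarrow> length y < n \<Longrightarrow> xi_at G \<zeta> y = xi_at G \<xi> y"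
  shows "ball_n n \<zeta> = ball_n n \<xi>"
proof
  show "ball_n n \<xi> \<subseteq> ball_n n \<zeta>" using sub by (auto simp: ball_n_def)
  have "y \<in> \<zeta> \<Longrightarrow> length y \<le> n \<Longrightarrow> y \<in> \<xi>" for y
  proof (induction y)
    case Nil then show ?case using Omega_Nil[OF xi] by simp
  next
    case (Cons x y)
    have "y \<in> \<xi>" using Omega_drop[OF zeta Cons.prems(1), of 1] Cons by simp
    have "x \<in> xi_at G \<zeta> y" using xi_at_Cons[OF zeta Cons.prems(1)] .
    also have "\<dots> = xi_at G \<xi> y" using loc[of y] \<open>y \<in> \<xi>\<close> Cons.prems(2) by (simp add: ball_n_def)
    finally have "wmult [x] y \<in> \<xi>" by (simp add: xi_at_iff)
    moreover have "reduced (x # y)" using Omega_reduced[OF zeta Cons.prems(1)] .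
    ultimately show ?case by (metis wmult_single cancel_cons_reduced_Cons reduced_Cons)
  qed
  then show "ball_n n \<zeta> \<subseteq> ball_n n \<xi>" by (auto simp: ball_n_def)
qed

lemma xi_at_ball_n_full:
  assumes "reduced z" "length z = k" "\<tau> \<in> xi_at G (ball_n k \<zeta>) z"
  shows "\<tau> = linv (hd z)"
proof (cases rule: wmult_cases[OF assms(1), of \<tau>])
  case 1 then show ?thesis by simp
next
  case 2 then show ?thesis using assms(2,3) by (simp add: xi_at_iff mem_ball_n)
qed

lemma rtrans_FG: "A \<subseteq> FG G \<Longrightarrow> h \<in> FG G \<Longrightarrow> rtrans A h \<subseteq> FG G"
proof
  fix w assume A: "A \<subseteq> FG G" and h: "h \<in> FG G" and "w \<in> rtrans A h"
  then obtain b where b: "b \<in> A" "w = red (b @ h)" by (auto simp: rtrans_def)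
  then have "b \<in> FG G" using A by blast
  then have "set (b @ h) \<subseteq> letters G" using h by (auto simp: FG_iff)
  then show "w \<in> FG G" using b set_red[of "b @ h"] by (auto simp: FG_iff)
qed

lemma xi_at_rtrans:
  assumes A: "\<forall>b\<in>A. reduced b"
  shows "xi_at G (rtrans A h) (red (y @ h)) = xi_at G A y"
proof -
  have "wmult [\<sigma>] (red (y @ h)) \<in> rtrans A h \<longleftrightarrow> wmult [\<sigma>] y \<in> A" for \<sigma>
  proof -
    have e1: "wmult [\<sigma>] (red (y @ h)) = red (\<sigma> # y @ h)" by (simp add: wmult_def red_Cons_red)
    have "red (red (\<sigma> # y @ h) @ winv h) = red ((\<sigma> # y) @ h @ winv h)"
      by (simp add: red_append_red_left)
    also have "\<dots> = wmult [\<sigma>] y" by (simp only: red_cancel_right wmult_def) simp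
    finally show ?thesis using mem_rtrans[OF A] e1 by simp
  qed
  then show ?thesis by (simp add: xi_at_def)
qed

lemma drop_rtrans:
  assumes "\<xi> \<in> Omega G" "reduced h" "winv h \<in> \<xi>" "w \<in> rtrans \<xi> h"
  shows "drop k w \<in> rtrans \<xi> h"
proof -
  obtain b where b: "b \<in> \<xi>" "w = red (b @ h)" using assms(4) by (auto simp: rtrans_def)
  from drop_red_append[OF Omega_reduced[OF assms(1) b(1)] assms(2), of k] show ?thesis
  proof (elim disjE exE)
    fix j assume "drop k (red (b @ h)) = red (drop j b @ h)"
    then show ?thesis using b Omega_drop[OF assms(1) b(1)] by (metis red_mem_rtrans)
  next
    fix j assume dj: "drop k (red (b @ h)) = drop j h"
    have "red (drop j h @ winv h) \<in> \<xi>"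
      using Omega_drop[OF assms(1,3)] winv_take_eq_drop_winv red_drop_winv[OF assms(2)] by metis
    moreover have "\<forall>b\<in>\<xi>. reduced b" using Omega_reduced[OF assms(1)] by blast
    ultimately have "drop j h \<in> rtrans \<xi> h" using mem_rtrans reduced_drop[OF assms(2)] by blast
    then show ?thesis using dj b by simp
  qed
qed

lemma rtrans_Omega:
  assumes xi: "\<xi> \<in> Omega G" and h: "h \<in> FG G" and hin: "winv h \<in> \<xi>"
  shows "rtrans \<xi> h \<in> Omega G"
  unfolding Omega_def
proof (intro CollectI conjI ballI allI)
  show "rtrans \<xi> h \<subseteq> FG G" using rtrans_FG[OF Omega_FG[OF xi] h] .
  show "[] \<in> rtrans \<xi> h" using red_mem_rtrans[OF hin, of h] red_cancel'[of h "[]"] by simp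
  fix w assume w: "w \<in> rtrans \<xi> h"
  show "drop k w \<in> rtrans \<xi> h" for k using drop_rtrans[OF xi _ hin w] h by (simp add: FG_iff)
  obtain b where "b \<in> \<xi>" "w = red (b @ h)" using w by (auto simp: rtrans_def)
  moreover have "\<forall>b\<in>\<xi>. reduced b" using Omega_reduced[OF xi] by blast
  ultimately show "local_ok G (xi_at G (rtrans \<xi> h) w)" using xi_at_rtrans Omega_local[OF xi] by metis
qed

lemma mem_theta:
  assumes "A \<subseteq> FG G"
  shows "y \<in> theta g A \<longleftrightarrow> reduced y \<and> red (y @ g) \<in> A"
proof -
  have "\<forall>b\<in>A. reduced b" using assms by (auto simp: FG_iff)
  then show ?thesis using mem_rtrans[of A y "winv g"] by (simp add: theta_rtrans)
qed

locale fin_bip =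
  fixes G :: "('v, 'e) sep_graph"
  assumes finite_bipartite: "finite_bipartite G"
begin

lemma finite_Edges: "finite (Edges G)"
  using finite_bipartite by (simp add: finite_bipartite_def)

lemma sr_V01: "e \<in> Edges G \<Longrightarrow> sr G e \<in> V01 G"
  using finite_bipartite by (auto simp: finite_bipartite_def)

lemma rg_V00: "e \<in> Edges G \<Longrightarrow> rg G e \<in> V00 G"
  using finite_bipartite by (auto simp: finite_bipartite_def)

lemma not_V00_V01: "v \<in> V00 G \<Longrightarrow> v \<in> V01 G \<Longrightarrow> False"
  using finite_bipartite by (auto simp: finite_bipartite_def)

lemma Cs_partition:
  assumes "v \<in> V00 G"
  shows "X \<in> Cs G v \<Longrightarrow> X \<noteq> {}"
    and "\<Union>(Cs G v) = {e \<in> Edges G. rg G e = v}"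
    and "X \<in> Cs G v \<Longrightarrow> Y \<in> Cs G v \<Longrightarrow> X \<noteq> Y \<Longrightarrow> X \<inter> Y = {}"
proof -
  have "separated_graph G" using finite_bipartite by (simp add: finite_bipartite_def)
  then have "\<forall>v \<in> Verts G. (\<forall>X \<in> Cs G v. X \<noteq> {}) \<and> \<Union>(Cs G v) = {e \<in> Edges G. rg G e = v} \<and>
      (\<forall>X \<in> Cs G v. \<forall>Y \<in> Cs G v. X \<noteq> Y \<longrightarrow> X \<inter> Y = {})"
    unfolding separated_graph_def by (rule conjunct2[OF conjunct2])
  moreover have "v \<in> Verts G" using assms by (simp add: Verts_def)
  ultimately have "(\<forall>X \<in> Cs G v. X \<noteq> {}) \<and> \<Union>(Cs G v) = {e \<in> Edges G. rg G e = v} \<and>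
      (\<forall>X \<in> Cs G v. \<forall>Y \<in> Cs G v. X \<noteq> Y \<longrightarrow> X \<inter> Y = {})"
    by (rule bspec)
  then show "X \<in> Cs G v \<Longrightarrow> X \<noteq> {}" "\<Union>(Cs G v) = {e \<in> Edges G. rg G e = v}"
    "X \<in> Cs G v \<Longrightarrow> Y \<in> Cs G v \<Longrightarrow> X \<noteq> Y \<Longrightarrow> X \<inter> Y = {}"
    by simp_all
qed

lemma Cs_mem: "v \<in> V00 G \<Longrightarrow> X \<in> Cs G v \<Longrightarrow> e \<in> X \<Longrightarrow> e \<in> Edges G \<and> rg G e = v"
proof -
  assume a: "v \<in> V00 G" "X \<in> Cs G v" "e \<in> X"
  then have "e \<in> \<Union>(Cs G v)" by blast
  then show ?thesis unfolding Cs_partition(2)[OF a(1)] by simp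
qed

lemma Xof_eq: "v \<in> V00 G \<Longrightarrow> X \<in> Cs G v \<Longrightarrow> e \<in> X \<Longrightarrow> Xof G e = X"
  unfolding Xof_def
proof (rule the_equality)
  assume a: "v \<in> V00 G" "X \<in> Cs G v" "e \<in> X"
  show "X \<in> Cs G (rg G e) \<and> e \<in> X" using a Cs_mem by simp
  fix Y assume "Y \<in> Cs G (rg G e) \<and> e \<in> Y"
  then show "Y = X" using a Cs_mem[OF a] Cs_partition(3)[OF a(1)] by blast
qed

lemma Xof_mem: "e \<in> Edges G \<Longrightarrow> Xof G e \<in> Cs G (rg G e) \<and> e \<in> Xof G e"
proof -
  assume e: "e \<in> Edges G"
  then have v: "rg G e \<in> V00 G" by (rule rg_V00)
  have "e \<in> \<Union>(Cs G (rg G e))" unfolding Cs_partition(2)[OF v] using e by simp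
  then obtain X where "X \<in> Cs G (rg G e)" "e \<in> X" by blast
  then show ?thesis using Xof_eq[OF v] by simp
qed

lemma finite_letters: "finite (letters G)"
  using finite_Edges by (simp add: letters_def)

lemma local_ok_letters:
  assumes "local_ok G A"
  shows "A \<subseteq> letters G"
  using assms unfolding local_ok_def
proof (elim disjE bexE exE conjE)
  fix v assume "A = {(e, True) |e. e \<in> Edges G \<and> sr G e = v}"
  then show ?thesis by (auto simp: letters_def)
next
  fix v ch assume "v \<in> V00 G" "\<forall>X\<in>Cs G v. ch X \<in> X" "A = (\<lambda>X. (ch X, False)) ` Cs G v"
  then show ?thesis using Cs_mem by (auto simp: letters_def)
qed

lemma local_ok_V01:
  assumes "f \<in> Edges G"
  shows "local_ok G {(e, True) |e. e \<in> Edges G \<and> sr G e = sr G f}"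
  unfolding local_ok_def using sr_V01[OF assms] by (intro disjI1 bexI[of _ "sr G f"]) auto

lemma local_ok_V00:
  assumes "v \<in> V00 G" "\<forall>X\<in>Cs G v. ch X \<in> X"
  shows "local_ok G ((\<lambda>X. (ch X, False)) ` Cs G v)"
  unfolding local_ok_def using assms by (intro disjI2 bexI[of _ v] exI[of _ ch]) auto

lemma local_ok_adm_pair:
  assumes A: "local_ok G A" and x: "x \<in> A" and y: "linv y \<in> A" and ne: "x \<noteq> linv y"
  shows "adm_pair G x y"
  using A unfolding local_ok_def
proof (elim disjE bexE exE conjE)
  fix v assume "A = {(e, True) |e. e \<in> Edges G \<and> sr G e = v}"
  then show ?thesis using x y ne
    by (auto simp: adm_pair_def lsrc_def ltgt_def linv_def prod_eq_iff)
next
  fix v ch assume v: "v \<in> V00 G" and ch: "\<forall>X\<in>Cs G v. ch X \<in> X"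
    and A_eq: "A = (\<lambda>X. (ch X, False)) ` Cs G v"
  obtain X where X: "X \<in> Cs G v" "x = (ch X, False)" using x A_eq by auto
  obtain Y where Y: "Y \<in> Cs G v" "y = (ch Y, True)"
    using y A_eq by (auto simp: linv_def prod_eq_iff)
  have "rg G (ch X) = v" "Xof G (ch X) = X" "rg G (ch Y) = v" "Xof G (ch Y) = Y"
    using Cs_mem[OF v] Xof_eq[OF v] ch X(1) Y(1) by auto
  moreover have "X \<noteq> Y" using X Y ne by (auto simp: linv_def)
  ultimately show ?thesis using X(2) Y(2) by (auto simp: adm_pair_def lsrc_def ltgt_def)
qed

lemma local_ok_pair:
  assumes x: "x \<in> letters G" and y: "y \<in> letters G" and a: "adm_pair G x y"
  shows "\<exists>A. local_ok G A \<and> linv y \<in> A \<and> x \<in> A"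
proof -
  obtain e b f c where xy: "x = (e, b)" "y = (f, c)" by (cases x, cases y)
  have e: "e \<in> Edges G" and f: "f \<in> Edges G" using x y xy by (simp_all add: letters_iff)
  show ?thesis
  proof (cases c)
    case False
    then have "b \<and> sr G e = sr G f"
      using a xy rg_V00[OF e] sr_V01[OF f] not_V00_V01
      by (cases b) (auto simp: adm_pair_def lsrc_def ltgt_def)
    then show ?thesis using local_ok_V01[OF f] xy False e f by (auto simp: linv_def)
  next
    case True
    let ?v = "rg G f"
    have v: "?v \<in> V00 G" using rg_V00[OF f] .
    have "\<not> b"
    proof
      assume b
      then have "sr G e = ?v" using a xy True by (simp add: adm_pair_def lsrc_def ltgt_def)
      then show False using sr_V01[OF e] v not_V00_V01 by auto
    qed
    then have h: "rg G e = ?v" "Xof G e \<noteq> Xof G f"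
      using a xy True by (auto simp: adm_pair_def lsrc_def ltgt_def)
    define ch where "ch X = (if X = Xof G f then f else if X = Xof G e then e else some_elem X)" for X
    have "\<forall>X\<in>Cs G ?v. ch X \<in> X"
    proof
      fix X assume "X \<in> Cs G ?v"
      then show "ch X \<in> X"
        using Xof_mem[OF f] Xof_mem[OF e] some_elem_nonempty[OF Cs_partition(1)[OF v]]
        by (simp add: ch_def)
    qed
    moreover have "linv y = (ch (Xof G f), False)" "x = (ch (Xof G e), False)"
      using xy True \<open>\<not> b\<close> h by (simp_all add: ch_def linv_def)
    moreover have "Xof G f \<in> Cs G ?v" "Xof G e \<in> Cs G ?v" using Xof_mem[OF f] Xof_mem[OF e] h by auto
    ultimately show ?thesis using local_ok_V00[OF v] by blast
  qed
qed

lemma local_ok_singleton_dead_end: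
  assumes A: "local_ok G {x}" and a: "adm_pair G x y" and y: "y \<in> letters G"
  shows False
proof -
  obtain f c where yf: "y = (f, c)" by (cases y)
  have f: "f \<in> Edges G" using y yf by (simp add: letters_iff)
  from A show False unfolding local_ok_def
  proof (elim disjE bexE exE conjE)
    fix v assume v: "v \<in> V01 G" and A_eq: "{x} = {(e, True) |e. e \<in> Edges G \<and> sr G e = v}"
    then obtain e where x: "x = (e, True)" "sr G e = v" by auto
    have lt: "ltgt G y = v" using a x by (simp add: adm_pair_def lsrc_def)
    show False
    proof (cases c)
      case True
      then have "rg G f = v" using lt yf by (simp add: ltgt_def)
      then show False using rg_V00[OF f] v not_V00_V01 by auto
    next
      case False
      then have "sr G f = v" using lt yf by (simp add: ltgt_def)
      then have "f = e" using A_eq f x by blast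
      then show False using a x yf False by (simp add: adm_pair_def)
    qed
  next
    fix v ch assume v: "v \<in> V00 G" and ch: "\<forall>X\<in>Cs G v. ch X \<in> X"
      and A_eq: "{x} = (\<lambda>X. (ch X, False)) ` Cs G v"
    obtain X where X: "X \<in> Cs G v" "x = (ch X, False)" using A_eq by auto
    have cx: "rg G (ch X) = v" "Xof G (ch X) = X"
      using Cs_mem[OF v X(1)] Xof_eq[OF v X(1)] ch X(1) by auto
    show False
    proof (cases c)
      case False
      then show False using a X cx yf sr_V01[OF f] v not_V00_V01 by (auto simp: adm_pair_def lsrc_def ltgt_def)
    next
      case True
      then have rf: "rg G f = v" using a X cx yf by (simp add: adm_pair_def lsrc_def ltgt_def)
      have Y: "Xof G f \<in> Cs G v" "f \<in> Xof G f" using Xof_mem[OF f] rf by auto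
      then have "(ch (Xof G f), False) \<in> {x}" using A_eq by auto
      then have "ch (Xof G f) = ch X" using X by simp
      then have "Xof G f = X" using ch Y X Cs_partition(3)[OF v] by (metis disjoint_iff)
      then show False using a X yf True cx by (simp add: adm_pair_def)
    qed
  qed
qed

lemma Omega_admissible:
  assumes xi: "\<xi> \<in> Omega G" and w: "w \<in> \<xi>" "w \<noteq> []"
  shows "admissible G w"
  unfolding admissible_def
proof (intro conjI allI impI)
  show "w \<noteq> []" by fact
  show "set w \<subseteq> letters G" using Omega_letters[OF xi w(1)] .
  fix i assume i: "Suc i < length w"
  let ?z = "drop (Suc i) w"
  have z: "?z \<in> \<xi>" "?z \<noteq> []" "hd ?z = w ! Suc i"
    using Omega_drop[OF xi w(1)] i by (auto simp: hd_drop_conv_nth)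
  have "drop i w = w ! i # ?z" using i by (simp add: Cons_nth_drop_Suc)
  then have "w ! i \<in> xi_at G \<xi> ?z" using xi_at_Cons[OF xi] Omega_drop[OF xi w(1), of i] by metis
  moreover have "linv (w ! Suc i) \<in> xi_at G \<xi> ?z"
    using Omega_xi_at_inverse_hd[OF xi z(1,2)] z(3) by simp
  moreover have "w ! i \<noteq> linv (w ! Suc i)"
    using Omega_reduced[OF xi w(1)] i by (auto simp: reduced_def)
  ultimately show "adm_pair G (w ! i) (w ! Suc i)"
    using local_ok_adm_pair[OF Omega_local[OF xi z(1)]] by blast
qed

text \<open>A shorter maximal word would see only its own backward letter, and a singleton local
  configuration admits no admissible continuation.\<close>
lemma maximal_full_length:
  assumes xi: "\<xi> \<in> Omega G" and mx: "maximal_in G (ball_n n \<xi>) \<beta>" and ne: "\<beta> \<noteq> []"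
    and a: "adm_pair G (linv (hd \<beta>)) y" and y: "y \<in> letters G"
  shows "length \<beta> = n"
proof (rule ccontr)
  assume "length \<beta> \<noteq> n"
  moreover have b: "\<beta> \<in> \<xi>" "length \<beta> \<le> n" using mx by (auto simp: maximal_in_def mem_ball_n)
  ultimately have lt: "length \<beta> < n" by simp
  have "xi_at G \<xi> \<beta> = {linv (hd \<beta>)}"
  proof (intro equalityI subsetI)
    fix \<tau> assume t: "\<tau> \<in> xi_at G \<xi> \<beta>"
    show "\<tau> \<in> {linv (hd \<beta>)}"
    proof (cases rule: wmult_cases[OF Omega_reduced[OF xi b(1)], of \<tau>])
      case 1 then show ?thesis by simp
    next
      case 2
      then show ?thesis using t mx lt by (auto simp: xi_at_iff maximal_in_def mem_ball_n)
    qed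
  qed (use Omega_xi_at_inverse_hd[OF xi b(1) ne] in simp)
  then have "local_ok G {linv (hd \<beta>)}" using Omega_local[OF xi b(1)] by simp
  then show False using local_ok_singleton_dead_end a y by blast
qed

text \<open>To extend a partial configuration beyond a new letter \<open>y\<close> we always use the same local
  configuration: besides \<open>y\<^sup>-\<^sup>1\<close>, every letter forming an admissible pair with \<open>y\<close>, where among
  inverse edges only the representative \<open>some_elem X\<close> of each class \<open>X\<close> is taken.\<close>

definition canon_pair :: "'e letter \<Rightarrow> 'e letter \<Rightarrow> bool" where
  "canon_pair x y \<longleftrightarrow> adm_pair G x y \<and> (\<not> snd x \<longrightarrow> fst x = some_elem (Xof G (fst x)))"

definition canon_local :: "'e letter \<Rightarrow> 'e letter set" where
  "canon_local y = insert (linv y) {x \<in> letters G. canon_pair x y}"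

lemma linv_mem_canon_local: "linv y \<in> canon_local y"
  by (simp add: canon_local_def)

lemma canon_pair_not_linv: "canon_pair x y \<Longrightarrow> y \<noteq> linv x"
  unfolding canon_pair_def using adm_pair_not_linv by blast

lemma canon_local_inverse_edge:
  assumes f: "f \<in> Edges G"
  shows "canon_local (f, False) = {(e, True) |e. e \<in> Edges G \<and> sr G e = sr G f}"
proof (intro equalityI subsetI)
  fix x assume x: "x \<in> canon_local (f, False)"
  obtain e b where xe: "x = (e, b)" by (cases x)
  show "x \<in> {(e, True) |e. e \<in> Edges G \<and> sr G e = sr G f}"
  proof (cases "x = linv (f, False)")
    case True then show ?thesis using f by (auto simp: linv_def)
  next
    case False
    then have e: "e \<in> Edges G" "adm_pair G (e, b) (f, False)"
      using x xe by (auto simp: canon_local_def canon_pair_def letters_iff)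
    have b
    proof (rule ccontr)
      assume "\<not> b"
      then have "rg G e = sr G f" using e(2) by (simp add: adm_pair_def lsrc_def ltgt_def)
      then show False using rg_V00[OF e(1)] sr_V01[OF f] not_V00_V01 by auto
    qed
    then show ?thesis using e xe by (auto simp: adm_pair_def lsrc_def ltgt_def)
  qed
next
  fix x assume "x \<in> {(e, True) |e. e \<in> Edges G \<and> sr G e = sr G f}"
  then obtain e where x: "x = (e, True)" "e \<in> Edges G" "sr G e = sr G f" by auto
  then show "x \<in> canon_local (f, False)"
    by (cases "e = f") (auto simp: canon_local_def canon_pair_def adm_pair_def lsrc_def ltgt_def
      linv_def letters_iff)
qed

lemma canon_local_edge:
  assumes f: "f \<in> Edges G"
  defines "ch \<equiv> \<lambda>X. if X = Xof G f then f else some_elem X"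
  shows "canon_local (f, True) = (\<lambda>X. (ch X, False)) ` Cs G (rg G f)"
proof (intro equalityI subsetI)
  let ?v = "rg G f"
  have v: "?v \<in> V00 G" using rg_V00[OF f] .
  fix x assume x: "x \<in> canon_local (f, True)"
  obtain e b where xe: "x = (e, b)" by (cases x)
  show "x \<in> (\<lambda>X. (ch X, False)) ` Cs G ?v"
  proof (cases "x = linv (f, True)")
    case True
    then show ?thesis using Xof_mem[OF f] by (auto simp: linv_def ch_def intro!: image_eqI[of _ _ "Xof G f"])
  next
    case False
    then have e: "e \<in> Edges G" "canon_pair (e, b) (f, True)"
      using x xe by (auto simp: canon_local_def letters_iff)
    have "\<not> b"
    proof
      assume b
      then have "sr G e = ?v" using e(2) by (simp add: canon_pair_def adm_pair_def lsrc_def ltgt_def)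
      then show False using sr_V01[OF e(1)] v not_V00_V01 by auto
    qed
    then have h: "rg G e = ?v" "Xof G e \<noteq> Xof G f" "e = some_elem (Xof G e)"
      using e(2) by (auto simp: canon_pair_def adm_pair_def lsrc_def ltgt_def)
    then have "Xof G e \<in> Cs G ?v" "ch (Xof G e) = e" using Xof_mem[OF e(1)] by (auto simp: ch_def)
    then show ?thesis using xe \<open>\<not> b\<close> by (auto intro!: image_eqI[of _ _ "Xof G e"])
  qed
next
  let ?v = "rg G f"
  have v: "?v \<in> V00 G" using rg_V00[OF f] .
  fix x assume "x \<in> (\<lambda>X. (ch X, False)) ` Cs G ?v"
  then obtain X where X: "X \<in> Cs G ?v" "x = (ch X, False)" by auto
  show "x \<in> canon_local (f, True)"
  proof (cases "X = Xof G f")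
    case True then show ?thesis using X by (simp add: canon_local_def linv_def ch_def)
  next
    case False
    then have c: "ch X = some_elem X" by (simp add: ch_def)
    have cm: "some_elem X \<in> X" using some_elem_nonempty[OF Cs_partition(1)[OF v X(1)]] .
    have "some_elem X \<in> Edges G" "rg G (some_elem X) = ?v" using Cs_mem[OF v X(1) cm] by auto
    moreover have "Xof G (some_elem X) = X" using Xof_eq[OF v X(1) cm] .
    ultimately show ?thesis using X c False
      by (auto simp: canon_local_def canon_pair_def adm_pair_def lsrc_def ltgt_def letters_iff)
  qed
qed

lemma local_ok_canon_local:
  assumes y: "y \<in> letters G"
  shows "local_ok G (canon_local y)"
proof -
  obtain f c where yf: "y = (f, c)" by (cases y)
  have f: "f \<in> Edges G" using y yf by (simp add: letters_iff)
  show ?thesis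
  proof (cases c)
    case False
    then show ?thesis using canon_local_inverse_edge[OF f] local_ok_V01[OF f] yf by simp
  next
    case True
    have "\<forall>X\<in>Cs G (rg G f). (if X = Xof G f then f else some_elem X) \<in> X"
      using Xof_mem[OF f] some_elem_nonempty[OF Cs_partition(1)[OF rg_V00[OF f]]] by auto
    then show ?thesis using canon_local_edge[OF f] local_ok_V00[OF rg_V00[OF f]] yf True by simp
  qed
qed

definition canon_path :: "'e word \<Rightarrow> bool" where
  "canon_path \<gamma> \<longleftrightarrow> (\<forall>i. Suc i < length \<gamma> \<longrightarrow> canon_pair (\<gamma> ! i) (\<gamma> ! Suc i))"

lemma canon_path_Cons: "canon_path (x # \<gamma>) \<longleftrightarrow> canon_path \<gamma> \<and> (\<gamma> \<noteq> [] \<longrightarrow> canon_pair x (hd \<gamma>))"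
  unfolding canon_path_def by (cases \<gamma>) (auto simp: nth_Cons split: nat.splits)

lemma canon_path_single: "canon_path [x]"
  by (simp add: canon_path_def)

lemma canon_path_drop: "canon_path \<gamma> \<Longrightarrow> canon_path (drop k \<gamma>)"
  unfolding canon_path_def by (auto simp: add.commute[of k])

lemma canon_path_reduced: "canon_path \<gamma> \<Longrightarrow> reduced \<gamma>"
  unfolding canon_path_def reduced_def using canon_pair_not_linv by blast

end

section \<open>Completing partial configurations\<close>

text \<open>At each word of \<open>S\<close> choose a local configuration containing the letters it sees and add
  the missing ones; beyond each new letter continue along canonical paths, whose local
  configurations are given by \<open>canon_local\<close>.\<close>

locale partial_config = fin_bip G for G :: "('v, 'e) sep_graph" +
  fixes S :: "'e word set"
  assumes S_FG: "S \<subseteq> FG G" and Nil_in_S: "[] \<in> S" and drop_in_S: "w \<in> S \<Longrightarrow> drop k w \<in> S"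
    and locally_extendable: "\<alpha> \<in> S \<Longrightarrow> \<exists>A. local_ok G A \<and> xi_at G S \<alpha> \<subseteq> A"
begin

definition local_choice :: "'e word \<Rightarrow> 'e letter set" where
  "local_choice \<alpha> = (if local_ok G (xi_at G S \<alpha>) then xi_at G S \<alpha>
                      else (SOME A. local_ok G A \<and> xi_at G S \<alpha> \<subseteq> A))"

definition sprout :: "'e word \<Rightarrow> 'e word \<Rightarrow> bool" where
  "sprout \<gamma> \<alpha> \<longleftrightarrow> \<alpha> \<in> S \<and> \<gamma> \<noteq> [] \<and> set \<gamma> \<subseteq> letters G \<and> canon_path \<gamma> \<and>
      last \<gamma> \<in> local_choice \<alpha> \<and> last \<gamma> \<notin> xi_at G S \<alpha>"

definition completion :: "'e word set" where
  "completion = S \<union> {\<gamma> @ \<alpha> | \<gamma> \<alpha>. sprout \<gamma> \<alpha>}"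

lemma local_choice:
  assumes "\<alpha> \<in> S"
  shows "local_ok G (local_choice \<alpha>)" "xi_at G S \<alpha> \<subseteq> local_choice \<alpha>"
proof -
  have "local_ok G (local_choice \<alpha>) \<and> xi_at G S \<alpha> \<subseteq> local_choice \<alpha>"
  proof (cases "local_ok G (xi_at G S \<alpha>)")
    case False
    then show ?thesis
      using someI_ex[OF locally_extendable[OF assms]] by (simp add: local_choice_def)
  qed (simp add: local_choice_def)
  then show "local_ok G (local_choice \<alpha>)" "xi_at G S \<alpha> \<subseteq> local_choice \<alpha>" by simp_all
qed

lemma S_reduced: "w \<in> S \<Longrightarrow> reduced w"
  using S_FG FG_iff by blast

lemma S_letters: "w \<in> S \<Longrightarrow> set w \<subseteq> letters G"
  using S_FG FG_iff by blast

lemma S_xi_at_inverse_hd: "\<alpha> \<in> S \<Longrightarrow> \<alpha> \<noteq> [] \<Longrightarrow> linv (hd \<alpha>) \<in> xi_at G S \<alpha>"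
  using xi_at_inverse_hd[OF S_FG] drop_in_S by blast

lemma sprout_reduced:
  assumes "sprout \<gamma> \<alpha>"
  shows "reduced (\<gamma> @ \<alpha>)"
proof -
  have "hd \<alpha> \<noteq> linv (last \<gamma>)" if "\<alpha> \<noteq> []"
    using S_xi_at_inverse_hd[of \<alpha>] assms that by (auto simp: sprout_def)
  then show ?thesis
    using assms canon_path_reduced S_reduced by (auto simp: sprout_def reduced_append)
qed

lemma sprout_FG: "sprout \<gamma> \<alpha> \<Longrightarrow> \<gamma> @ \<alpha> \<in> FG G"
  using sprout_reduced S_letters by (auto simp: FG_iff sprout_def)

text \<open>Such a suffix would contain \<open>last \<gamma> # \<alpha>\<close>, so \<open>last \<gamma>\<close> would already be seen
  at \<open>\<alpha>\<close>.\<close>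
lemma sprout_drop_notin_S:
  assumes r: "sprout \<gamma> \<alpha>" and k: "k < length \<gamma>"
  shows "drop k (\<gamma> @ \<alpha>) \<notin> S"
proof
  assume suffix_in_S: "drop k (\<gamma> @ \<alpha>) \<in> S"
  have "\<gamma> \<noteq> []" using k by auto
  then have "drop (length \<gamma> - 1) (\<gamma> @ \<alpha>) = last \<gamma> # \<alpha>"
    by (induction \<gamma> rule: rev_induct) auto
  moreover have "drop (length \<gamma> - 1 - k) (drop k (\<gamma> @ \<alpha>)) = drop (length \<gamma> - 1) (\<gamma> @ \<alpha>)"
    using k by (simp add: drop_drop)
  ultimately have in_S: "last \<gamma> # \<alpha> \<in> S" using drop_in_S[OF suffix_in_S] by metis
  have "reduced (last \<gamma> # \<alpha>)" using S_reduced[OF in_S] .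
  then have "wmult [last \<gamma>] \<alpha> = last \<gamma> # \<alpha>"
    by (metis wmult_single cancel_cons_reduced_Cons reduced_Cons)
  moreover have "last \<gamma> \<in> letters G" using r by (auto simp: sprout_def)
  ultimately have "last \<gamma> \<in> xi_at G S \<alpha>" using in_S by (simp add: xi_at_iff)
  then show False using r by (simp add: sprout_def)
qed

lemma sprout_base_longest:
  assumes "sprout \<gamma> \<alpha>" "\<gamma> @ \<alpha> = u @ \<beta>" "\<beta> \<in> S"
  shows "length \<beta> \<le> length \<alpha>"
proof (rule ccontr)
  assume "\<not> length \<beta> \<le> length \<alpha>"
  then have "length u < length \<gamma>" using arg_cong[OF assms(2), of length] by simp
  moreover have "\<beta> = drop (length u) (\<gamma> @ \<alpha>)" using assms(2) by simp
  ultimately show False using sprout_drop_notin_S[OF assms(1)] assms(3) by metis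
qed

lemma completion_FG: "completion \<subseteq> FG G"
  using S_FG sprout_FG by (auto simp: completion_def)

lemma drop_completion: "w \<in> completion \<Longrightarrow> drop k w \<in> completion"
proof (cases "w \<in> S")
  case False
  assume "w \<in> completion"
  then obtain \<gamma> \<alpha> where r: "sprout \<gamma> \<alpha>" and w: "w = \<gamma> @ \<alpha>" using False by (auto simp: completion_def)
  show ?thesis
  proof (cases "k < length \<gamma>")
    case True
    then have "sprout (drop k \<gamma>) \<alpha>" using r canon_path_drop
      by (auto simp: sprout_def last_drop dest: in_set_dropD)
    then show ?thesis using w True by (auto simp: completion_def)
  next
    case False
    then show ?thesis using w r drop_in_S by (auto simp: completion_def sprout_def)
  qed
qed (auto simp: completion_def drop_in_S)

lemma xi_at_completion_S:
  assumes a: "\<alpha> \<in> S"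
  shows "xi_at G completion \<alpha> = local_choice \<alpha>"
proof (intro equalityI subsetI)
  have ar: "reduced \<alpha>" using S_reduced[OF a] .
  fix \<sigma> assume "\<sigma> \<in> xi_at G completion \<alpha>"
  then have sl: "\<sigma> \<in> letters G" and w: "wmult [\<sigma>] \<alpha> \<in> completion" by (auto simp: xi_at_iff)
  show "\<sigma> \<in> local_choice \<alpha>"
  proof (cases "wmult [\<sigma>] \<alpha> \<in> S")
    case True then show ?thesis using local_choice(2)[OF a] sl by (auto simp: xi_at_iff)
  next
    case False
    then obtain \<gamma>' \<alpha>' where r: "sprout \<gamma>' \<alpha>'" "wmult [\<sigma>] \<alpha> = \<gamma>' @ \<alpha>'"
      using w by (auto simp: completion_def)
    have "wmult [\<sigma>] \<alpha> \<noteq> tl \<alpha>" using False drop_in_S[OF a, of 1] by (auto simp: drop_Suc)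
    then have e: "[\<sigma>] @ \<alpha> = \<gamma>' @ \<alpha>'" using r(2) by (cases rule: wmult_cases[OF ar, of \<sigma>]) auto
    have "length \<alpha> \<le> length \<alpha>'" using sprout_base_longest[OF r(1) e[symmetric] a] .
    moreover have "\<gamma>' \<noteq> []" using r(1) by (simp add: sprout_def)
    ultimately have "length \<alpha>' = length \<alpha>" using arg_cong[OF e, of length] by (cases \<gamma>') auto
    then have "[\<sigma>] = \<gamma>' \<and> \<alpha> = \<alpha>'" using e append_eq_append_conv by metis
    then show ?thesis using r(1) by (force simp: sprout_def)
  qed
next
  have ar: "reduced \<alpha>" using S_reduced[OF a] .
  fix \<sigma> assume s: "\<sigma> \<in> local_choice \<alpha>"
  then have sl: "\<sigma> \<in> letters G" using local_ok_letters local_choice(1)[OF a] by blast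
  show "\<sigma> \<in> xi_at G completion \<alpha>"
  proof (cases "\<sigma> \<in> xi_at G S \<alpha>")
    case True then show ?thesis by (auto simp: xi_at_iff completion_def)
  next
    case False
    then have "\<alpha> = [] \<or> \<sigma> \<noteq> linv (hd \<alpha>)" using S_xi_at_inverse_hd[OF a] by auto
    then have "wmult [\<sigma>] \<alpha> = [\<sigma>] @ \<alpha>" by (cases rule: wmult_cases[OF ar, of \<sigma>]) auto
    moreover have "sprout [\<sigma>] \<alpha>" using a sl False s canon_path_single by (simp add: sprout_def)
    ultimately show ?thesis using sl unfolding xi_at_iff completion_def by blast
  qed
qed

lemma Cons_sprout_in_completion:
  assumes r: "sprout \<gamma> \<alpha>" and w: "\<sigma> # \<gamma> @ \<alpha> \<in> completion"
  shows "sprout (\<sigma> # \<gamma>) \<alpha>"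
proof -
  have g: "\<gamma> \<noteq> []" "\<alpha> \<in> S" using r by (auto simp: sprout_def)
  have "\<sigma> # \<gamma> @ \<alpha> \<notin> S" using sprout_drop_notin_S[OF r, of 0] drop_in_S[of _ 1] g by fastforce
  then obtain \<gamma>' \<alpha>' where r': "sprout \<gamma>' \<alpha>'" and e: "\<sigma> # \<gamma> @ \<alpha> = \<gamma>' @ \<alpha>'"
    using w by (auto simp: completion_def)
  obtain \<gamma>'' where g': "\<gamma>' = \<sigma> # \<gamma>''" using e r' by (cases \<gamma>') (auto simp: sprout_def)
  have "\<gamma>' @ \<alpha>' = (\<sigma> # \<gamma>) @ \<alpha>" using e by simp
  then have "length \<alpha> \<le> length \<alpha>'" using sprout_base_longest[OF r' _ g(2)] by blast
  moreover have "\<gamma> @ \<alpha> = \<gamma>'' @ \<alpha>'" using e g' by simp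
  then have "length \<alpha>' \<le> length \<alpha>" using sprout_base_longest[OF r] r' by (simp add: sprout_def)
  ultimately have "\<gamma>' = \<sigma> # \<gamma> \<and> \<alpha>' = \<alpha>"
    using e append_eq_append_conv[of "\<sigma> # \<gamma>" \<gamma>' \<alpha> \<alpha>'] by simp
  then show ?thesis using r' by simp
qed

lemma xi_at_completion_sprout:
  assumes r: "sprout \<gamma> \<alpha>"
  shows "xi_at G completion (\<gamma> @ \<alpha>) = canon_local (hd \<gamma>)"
proof (intro equalityI subsetI)
  have zr: "reduced (\<gamma> @ \<alpha>)" using sprout_reduced[OF r] .
  have g: "\<gamma> \<noteq> []" using r by (simp add: sprout_def)
  fix \<sigma> assume "\<sigma> \<in> xi_at G completion (\<gamma> @ \<alpha>)"
  then have sl: "\<sigma> \<in> letters G" and w: "wmult [\<sigma>] (\<gamma> @ \<alpha>) \<in> completion" by (auto simp: xi_at_iff)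
  show "\<sigma> \<in> canon_local (hd \<gamma>)"
  proof (cases rule: wmult_cases[OF zr, of \<sigma>])
    case 1 then show ?thesis using g by (simp add: linv_mem_canon_local)
  next
    case 2
    then have "sprout (\<sigma> # \<gamma>) \<alpha>" using Cons_sprout_in_completion[OF r] w by simp
    then have "canon_pair \<sigma> (hd \<gamma>)" using g(1) by (simp add: sprout_def canon_path_Cons)
    then show ?thesis using sl by (simp add: canon_local_def)
  qed
next
  have zr: "reduced (\<gamma> @ \<alpha>)" using sprout_reduced[OF r] .
  have g: "\<gamma> \<noteq> []" "set \<gamma> \<subseteq> letters G" using r by (auto simp: sprout_def)
  have z_in: "\<gamma> @ \<alpha> \<in> completion" using r by (auto simp: completion_def)
  fix \<sigma> assume "\<sigma> \<in> canon_local (hd \<gamma>)"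
  then consider "\<sigma> = linv (hd \<gamma>)" | "\<sigma> \<in> letters G" "canon_pair \<sigma> (hd \<gamma>)"
    by (auto simp: canon_local_def)
  then show "\<sigma> \<in> xi_at G completion (\<gamma> @ \<alpha>)"
  proof cases
    case 1
    then have "wmult [\<sigma>] (\<gamma> @ \<alpha>) = drop 1 (\<gamma> @ \<alpha>)"
      using zr g(1) cancel_cons_inverse_hd[of "\<gamma> @ \<alpha>"] by (cases \<gamma>) (simp_all add: wmult_single)
    moreover have "hd \<gamma> \<in> letters G" using g by auto
    ultimately show ?thesis using 1 drop_completion[OF z_in, of 1] by (simp add: xi_at_iff)
  next
    case 2
    then have "\<sigma> \<noteq> linv (hd (\<gamma> @ \<alpha>))" using canon_pair_not_linv g(1) by fastforce
    then have "wmult [\<sigma>] (\<gamma> @ \<alpha>) = (\<sigma> # \<gamma>) @ \<alpha>" by (cases rule: wmult_cases[OF zr, of \<sigma>]) auto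
    moreover have "sprout (\<sigma> # \<gamma>) \<alpha>" using r 2 g(1) by (simp add: sprout_def canon_path_Cons)
    ultimately show ?thesis using 2(1) unfolding xi_at_iff completion_def by blast
  qed
qed

lemma completion_Omega: "completion \<in> Omega G"
  unfolding Omega_def
proof (intro CollectI conjI ballI allI)
  show "completion \<subseteq> FG G" "[] \<in> completion"
    using completion_FG Nil_in_S by (auto simp: completion_def)
  show "drop k w \<in> completion" if "w \<in> completion" for w k using drop_completion[OF that] .
  fix w assume "w \<in> completion"
  then consider "w \<in> S" | \<gamma> \<alpha> where "sprout \<gamma> \<alpha>" "w = \<gamma> @ \<alpha>" by (auto simp: completion_def)
  then show "local_ok G (xi_at G completion w)"
  proof cases
    case 1 then show ?thesis using xi_at_completion_S local_choice(1) by simp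
  next
    case 2
    then have "hd \<gamma> \<in> letters G" by (auto simp: sprout_def)
    then show ?thesis using 2 xi_at_completion_sprout local_ok_canon_local by simp
  qed
qed

end

lemma (in fin_bip) Omega_extension:
  assumes "S \<subseteq> FG G" "[] \<in> S" "\<And>w k. w \<in> S \<Longrightarrow> drop k w \<in> S"
    and "\<And>\<alpha>. \<alpha> \<in> S \<Longrightarrow> \<exists>A. local_ok G A \<and> xi_at G S \<alpha> \<subseteq> A"
  shows "\<exists>\<xi>\<in>Omega G. S \<subseteq> \<xi> \<and>
    (\<forall>\<alpha>\<in>S. local_ok G (xi_at G S \<alpha>) \<longrightarrow> xi_at G \<xi> \<alpha> = xi_at G S \<alpha>)"
proof -
  interpret partial_config G S
    using assms by unfold_locales auto
  show ?thesis
    using completion_Omega xi_at_completion_S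
    by (intro bexI[of _ completion]) (auto simp: completion_def local_choice_def)
qed

context fin_bip
begin

definition cyl :: "nat \<Rightarrow> 'e word set \<Rightarrow> 'e word set set" where
  "cyl n \<xi> = {\<eta> \<in> Omega G. ball_n n \<eta> = ball_n n \<xi>}"

abbreviation char_FG :: "'e word set \<Rightarrow> 'e word \<Rightarrow> bool" where
  "char_FG \<xi> \<equiv> restrict (\<lambda>w. w \<in> \<xi>) (FG G)"

abbreviation cantor_top :: "('e word \<Rightarrow> bool) topology" where
  "cantor_top \<equiv> product_topology (\<lambda>_. discrete_topology UNIV) (FG G)"

lemma Omega_top_eq: "Omega_top G = pullback_topology (Omega G) char_FG cantor_top"
  by (simp add: Omega_top_def)

lemma topspace_Omega_top: "topspace (Omega_top G) = Omega G"
proof -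
  have "char_FG \<xi> \<in> topspace cantor_top" for \<xi> by (simp add: PiE_iff)
  then show ?thesis unfolding Omega_top_eq topspace_pullback_topology by blast
qed

lemma openin_Omega_subset: "openin (Omega_top G) U \<Longrightarrow> U \<subseteq> Omega G"
  using openin_subset topspace_Omega_top by metis

lemma finite_short_words: "finite {w \<in> FG G. length w \<le> n}"
proof -
  have "{w \<in> FG G. length w \<le> n} \<subseteq> {xs. set xs \<subseteq> letters G \<and> length xs \<le> n}"
    by (auto simp: FG_iff)
  moreover have "finite {xs. set xs \<subseteq> letters G \<and> length xs \<le> n}"
    using finite_lists_length_le[OF finite_letters] .
  ultimately show ?thesis by (rule finite_subset)
qed

lemma cyl_self: "\<xi> \<in> Omega G \<Longrightarrow> \<xi> \<in> cyl n \<xi>"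
  by (simp add: cyl_def)

lemma cyl_mono: "k \<le> K \<Longrightarrow> cyl K \<xi> \<subseteq> cyl k \<xi>"
  unfolding cyl_def using ball_n_eq_mono[of k K] by blast

lemma openin_cyl:
  assumes xi: "\<xi> \<in> Omega G"
  shows "openin (Omega_top G) (cyl n \<xi>)"
proof -
  define X where "X w = (if w \<in> FG G \<and> length w \<le> n then {b. b = (w \<in> \<xi>)} else UNIV)" for w
  have op: "openin cantor_top (Pi\<^sub>E (FG G) X)"
  proof (rule product_topology_basis)
    show "openin (discrete_topology UNIV) (X i)" for i by simp
    have "{i. X i \<noteq> topspace (discrete_topology UNIV)} \<subseteq> {w \<in> FG G. length w \<le> n}"
      by (auto simp: X_def)
    then show "finite {i. X i \<noteq> topspace (discrete_topology UNIV)}"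
      using finite_short_words finite_subset by blast
  qed
  have "cyl n \<xi> = char_FG -` Pi\<^sub>E (FG G) X \<inter> Omega G"
  proof (intro equalityI subsetI)
    fix \<eta> assume "\<eta> \<in> cyl n \<xi>"
    then have e: "\<eta> \<in> Omega G" "ball_n n \<eta> = ball_n n \<xi>" by (auto simp: cyl_def)
    have "char_FG \<eta> \<in> Pi\<^sub>E (FG G) X"
      using ball_n_eq_mem[OF e(2)] by (auto simp: X_def PiE_iff)
    then show "\<eta> \<in> char_FG -` Pi\<^sub>E (FG G) X \<inter> Omega G" using e by simp
  next
    fix \<eta> assume "\<eta> \<in> char_FG -` Pi\<^sub>E (FG G) X \<inter> Omega G"
    then have e: "\<eta> \<in> Omega G" and p: "\<forall>w\<in>FG G. length w \<le> n \<longrightarrow> (w \<in> \<eta>) = (w \<in> \<xi>)"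
      by (auto simp: X_def PiE_iff)
    have "ball_n n \<eta> = ball_n n \<xi>"
      using p Omega_FG[OF e] Omega_FG[OF xi] by (auto simp: ball_n_def)
    then show "\<eta> \<in> cyl n \<xi>" using e by (simp add: cyl_def)
  qed
  then show ?thesis unfolding Omega_top_eq openin_pullback_topology using op by blast
qed

lemma open_contains_cyl:
  assumes U: "openin (Omega_top G) U" and xi: "\<xi> \<in> U"
  shows "\<exists>n\<ge>1. cyl n \<xi> \<subseteq> U"
proof -
  obtain V where V: "openin cantor_top V" "U = char_FG -` V \<inter> Omega G"
    using U unfolding Omega_top_eq openin_pullback_topology by blast
  have "char_FG \<xi> \<in> V" using V xi by blast
  from product_topology_open_contains_basis[OF V(1) this] obtain X where
    X: "char_FG \<xi> \<in> Pi\<^sub>E (FG G) X" "\<forall>i. openin (discrete_topology UNIV) (X i)"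
       "finite {i. X i \<noteq> topspace (discrete_topology (UNIV::bool set))}" "Pi\<^sub>E (FG G) X \<subseteq> V"
    by blast
  define K where "K = {i. X i \<noteq> topspace (discrete_topology (UNIV::bool set))}"
  define n where "n = Suc (Max (insert 0 (length ` K)))"
  have Kn: "length w < n" if "w \<in> K" for w
  proof -
    have "length w \<le> Max (insert 0 (length ` K))" using X(3) that by (simp add: K_def)
    then show ?thesis by (simp add: n_def)
  qed
  have "cyl n \<xi> \<subseteq> U"
  proof
    fix \<eta> assume "\<eta> \<in> cyl n \<xi>"
    then have e: "\<eta> \<in> Omega G" "ball_n n \<eta> = ball_n n \<xi>" by (auto simp: cyl_def)
    have "char_FG \<eta> \<in> Pi\<^sub>E (FG G) X"
    proof (unfold PiE_iff, intro conjI ballI)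
      fix w assume w: "w \<in> FG G"
      show "char_FG \<eta> w \<in> X w"
      proof (cases "w \<in> K")
        case True
        then have "(w \<in> \<eta>) = (w \<in> \<xi>)" using ball_n_eq_mem[OF e(2)] Kn by fastforce
        then show ?thesis using X(1) w by (auto simp: PiE_iff)
      next
        case False then show ?thesis by (simp add: K_def)
      qed
    qed simp
    then show "\<eta> \<in> U" using V X(4) e by blast
  qed
  moreover have "n \<ge> 1" by (simp add: n_def)
  ultimately show ?thesis by blast
qed

lemma cyl_avoids_finite:
  assumes "finite F" "\<xi> \<notin> F"
  obtains K where "cyl K \<xi> \<inter> F = {}"
proof -
  define d where "d f = (SOME w. (w \<in> f) \<noteq> (w \<in> \<xi>))" for f
  define K where "K = Max (insert 0 ((\<lambda>f. length (d f)) ` F))"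
  have "f \<notin> cyl K \<xi>" if "f \<in> F" for f
  proof
    assume "f \<in> cyl K \<xi>"
    then have "ball_n K f = ball_n K \<xi>" by (simp add: cyl_def)
    moreover have "length (d f) \<le> K" unfolding K_def using assms(1) that by (intro Max_ge) auto
    moreover have "f \<noteq> \<xi>" using assms(2) that by blast
    then have "\<exists>w. (w \<in> f) \<noteq> (w \<in> \<xi>)" by blast
    then have "(d f \<in> f) \<noteq> (d f \<in> \<xi>)" unfolding d_def by (rule someI_ex)
    ultimately show False using ball_n_eq_mem by blast
  qed
  then show ?thesis using that by blast
qed

lemma cyl_not_singleton:
  assumes "no_isolated_points (Omega_top G)" "\<xi> \<in> Omega G"
  obtains \<eta> where "\<eta> \<in> cyl K \<xi>" "\<eta> \<noteq> \<xi>"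
proof -
  have "\<not> openin (Omega_top G) {\<xi>}"
    using assms topspace_Omega_top by (simp add: no_isolated_points_def)
  then have "cyl K \<xi> \<noteq> {\<xi>}" using openin_cyl[OF assms(2), of K] by metis
  then show ?thesis using that cyl_self[OF assms(2), of K] by blast
qed

lemma ball_n_theta_eq:
  assumes "\<zeta> \<subseteq> FG G" "\<xi> \<subseteq> FG G" "ball_n (K + length g) \<zeta> = ball_n (K + length g) \<xi>"
  shows "ball_n K (theta g \<zeta>) = ball_n K (theta g \<xi>)"
proof -
  have "(y \<in> theta g \<zeta>) = (y \<in> theta g \<xi>)" if "length y \<le> K" for y
  proof -
    have "length (red (y @ g)) \<le> K + length g" using length_red_le[of "y @ g"] that by simp
    then show ?thesis using mem_theta[OF assms(1)] mem_theta[OF assms(2)] ball_n_eq_mem[OF assms(3)]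
      by blast
  qed
  then show ?thesis by (auto simp: ball_n_def)
qed

end

section \<open>Gluing two balls along a link\<close>

locale linked_balls = fin_bip G for G :: "('v, 'e) sep_graph" +
  fixes \<xi> \<xi>' :: "'e word set" and \<beta> \<beta>' \<alpha> :: "'e word" and n m :: nat
  assumes xi_Omega: "\<xi> \<in> Omega G" and xi'_Omega: "\<xi>' \<in> Omega G"
    and beta_in: "\<beta> \<in> \<xi>" and beta_length: "length \<beta> = n" and beta_ne: "\<beta> \<noteq> []"
    and beta'_in: "\<beta>' \<in> \<xi>'" and beta'_length: "length \<beta>' = m" and beta'_ne: "\<beta>' \<noteq> []"
    and admissible_link: "admissible G (linv (hd \<beta>) # \<alpha> @ [hd \<beta>'])"
begin

abbreviation link :: "'e word" where "link \<equiv> linv (hd \<beta>) # \<alpha> @ [hd \<beta>']"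

text \<open>The partial configuration \<open>S\<close> consists of \<open>B'\<close>, the translate \<open>T\<close> of \<open>B\<close> by
  \<open>W = \<beta>\<^sup>-\<^sup>1 \<alpha> \<beta>'\<close> (where \<open>\<beta>\<close> becomes \<open>\<alpha> \<beta>'\<close>), and the suffixes \<open>Q\<close> of \<open>\<alpha> \<beta>'\<close>
  joining them; \<open>a\<close> is the letter of the link preceding \<open>hd \<beta>'\<close>.\<close>

definition rest :: "'e word" where "rest = \<alpha> @ \<beta>'"
definition W :: "'e word" where "W = winv \<beta> @ rest"
definition B :: "'e word set" where "B = ball_n n \<xi>"
definition B' :: "'e word set" where "B' = ball_n m \<xi>'"
definition Q :: "'e word set" where "Q = {drop j rest | j. j \<le> length \<alpha>}"
definition T :: "'e word set" where "T = rtrans B W"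
definition S :: "'e word set" where "S = B' \<union> Q \<union> T"
definition a :: "'e letter" where "a = last (linv (hd \<beta>) # \<alpha>)"

lemma link_reduced: "reduced link" using admissible_reduced[OF admissible_link] .
lemma link_letters: "set link \<subseteq> letters G" using admissible_letters[OF admissible_link] .

lemma beta_reduced: "reduced \<beta>" using Omega_reduced[OF xi_Omega beta_in] .
lemma beta'_reduced: "reduced \<beta>'" using Omega_reduced[OF xi'_Omega beta'_in] .
lemma beta_letters: "set \<beta> \<subseteq> letters G" using Omega_letters[OF xi_Omega beta_in] .
lemma beta'_letters: "set \<beta>' \<subseteq> letters G" using Omega_letters[OF xi'_Omega beta'_in] .

lemma beta'_split: "\<beta>' = hd \<beta>' # tl \<beta>'" using beta'_ne by simp
lemma beta_split: "\<beta> = hd \<beta> # tl \<beta>" using beta_ne by simp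

lemma rest_reduced: "reduced rest"
proof -
  have "reduced (\<alpha> @ [hd \<beta>'])" using reduced_drop[OF link_reduced, of 1] by simp
  moreover have "reduced (hd \<beta>' # tl \<beta>')" using beta'_reduced beta'_split by simp
  ultimately have "reduced (\<alpha> @ hd \<beta>' # tl \<beta>')" by (rule reduced_join)
  then show ?thesis using beta'_split by (simp add: rest_def)
qed

lemma reduced_Cons_rest: "reduced (linv (hd \<beta>) # rest)"
proof -
  have "reduced ((linv (hd \<beta>) # \<alpha>) @ [hd \<beta>'])" using link_reduced by simp
  moreover have "reduced (hd \<beta>' # tl \<beta>')" using beta'_reduced beta'_split by simp
  ultimately have "reduced ((linv (hd \<beta>) # \<alpha>) @ hd \<beta>' # tl \<beta>')" by (rule reduced_join)
  then show ?thesis using beta'_split by (simp add: rest_def)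
qed

lemma W_reduced: "reduced W"
proof -
  have "reduced (winv \<beta>)" using beta_reduced by simp
  then have "reduced (winv (tl \<beta>) @ [linv (hd \<beta>)])" using beta_split by (metis winv_Cons)
  then have "reduced (winv (tl \<beta>) @ linv (hd \<beta>) # rest)" using reduced_Cons_rest by (rule reduced_join)
  then show ?thesis unfolding W_def using beta_split by (metis append.assoc append_Cons append_Nil winv_Cons)
qed

lemma rest_letters: "set rest \<subseteq> letters G" using link_letters beta'_letters by (auto simp: rest_def)

lemma W_FG: "W \<in> FG G"
  using W_reduced rest_letters beta_letters by (auto simp: FG_iff W_def set_winv)

lemma B_subset: "B \<subseteq> \<xi>" and B'_subset: "B' \<subseteq> \<xi>'" by (auto simp: B_def B'_def ball_n_def)
lemma B_reduced: "\<forall>b\<in>B. reduced b" using B_subset Omega_reduced[OF xi_Omega] by blast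

lemma length_rest: "length rest = length \<alpha> + m" using beta'_length by (simp add: rest_def)

lemma T_form:
  assumes y: "y \<in> B"
  shows "red (y @ W) = red (y @ winv \<beta>) @ rest"
    and "red (y @ winv \<beta>) = [] \<or> last (red (y @ winv \<beta>)) = linv (hd \<beta>)"
    and "red (y @ winv \<beta>) = [] \<longleftrightarrow> y = \<beta>"
proof -
  have yr: "reduced y" using B_reduced y by blast
  have yl: "length y \<le> length \<beta>" using y beta_length by (simp add: B_def mem_ball_n)
  let ?u = "red (y @ winv \<beta>)"
  show u: "?u = [] \<or> last ?u = linv (hd \<beta>)" using red_append_winv_last[OF yr beta_reduced beta_ne yl] by blast
  have "red (y @ W) = red (?u @ rest)" unfolding W_def by (simp add: red_append_red_left)
  moreover have "reduced (?u @ rest)"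
  proof (cases "?u = []")
    case True then show ?thesis using rest_reduced by simp
  next
    case False
    then have "last ?u = linv (hd \<beta>)" using u by simp
    then show ?thesis using reduced_Cons_rest False by (auto simp: reduced_append reduced_Cons)
  qed
  ultimately show "red (y @ W) = ?u @ rest" by (simp add: red_id)
  show "?u = [] \<longleftrightarrow> y = \<beta>"
  proof
    assume "?u = []"
    then have "red (?u @ \<beta>) = \<beta>" using beta_reduced by (simp add: red_id)
    moreover have "red (?u @ \<beta>) = y" using yr by (simp add: red_append_red_left red_cancel_right' red_id)
    ultimately show "y = \<beta>" by simp
  next
    assume "y = \<beta>" then show "?u = []" using red_cancel_right[of "[]" \<beta>] by simp
  qed
qed

lemma T_elem:
  "z \<in> T \<Longrightarrow> \<exists>y u. y \<in> B \<and> z = red (y @ W) \<and> z = u @ rest \<and>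
     (u = [] \<or> last u = linv (hd \<beta>)) \<and> (u = [] \<longleftrightarrow> y = \<beta>)"
  unfolding T_def rtrans_def using T_form by blast

lemma W_in_T: "W \<in> T"
proof -
  have "[] \<in> B" using Omega_Nil[OF xi_Omega] by (simp add: B_def mem_ball_n)
  then show ?thesis unfolding T_def rtrans_def using W_reduced by (auto simp: red_id intro!: image_eqI[of _ _ "[]"])
qed

lemma rest_in_T: "rest \<in> T"
proof -
  have "\<beta> \<in> B" using beta_in beta_length by (simp add: B_def mem_ball_n)
  then have "red (\<beta> @ W) \<in> T" unfolding T_def by (rule red_mem_rtrans)
  moreover have "red (\<beta> @ W) = rest" using T_form(1)[OF \<open>\<beta> \<in> B\<close>] red_cancel_right[of "[]" \<beta>] by simp
  ultimately show ?thesis by simp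
qed

lemma length_T: "z \<in> T \<Longrightarrow> length rest \<le> length z"
  using T_elem by fastforce

lemma QT_form: "z \<in> Q \<union> T \<Longrightarrow> \<exists>v. z = v @ \<beta>' \<and> (v = [] \<or> last v = a)"
proof -
  assume "z \<in> Q \<union> T"
  then show ?thesis
  proof
    assume "z \<in> Q"
    then obtain j where j: "z = drop j rest" "j \<le> length \<alpha>" by (auto simp: Q_def)
    then have "z = drop j \<alpha> @ \<beta>'" by (simp add: rest_def)
    moreover have "drop j \<alpha> = [] \<or> last (drop j \<alpha>) = a" unfolding a_def by (cases "j < length \<alpha>") (auto simp: last_drop)
    ultimately show ?thesis by blast
  next
    assume "z \<in> T"
    then obtain y u where h: "z = u @ rest" "u = [] \<or> last u = linv (hd \<beta>)" using T_elem by blast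
    have "z = (u @ \<alpha>) @ \<beta>'" using h by (simp add: rest_def)
    moreover have "u @ \<alpha> = [] \<or> last (u @ \<alpha>) = a" unfolding a_def using h(2) by (cases "\<alpha> = []") auto
    ultimately show ?thesis by blast
  qed
qed

lemma length_Q: "z \<in> Q \<Longrightarrow> m \<le> length z \<and> length z \<le> length rest"
  by (auto simp: Q_def length_rest)

lemma B'_reduced: "\<forall>b\<in>B'. reduced b" using B'_subset Omega_reduced[OF xi'_Omega] by blast

lemma S_FG: "S \<subseteq> FG G"
proof -
  have "B' \<subseteq> FG G" using B'_subset Omega_FG[OF xi'_Omega] by blast
  moreover have "Q \<subseteq> FG G"
  proof
    fix z assume "z \<in> Q"
    then obtain j where "z = drop j rest" by (auto simp: Q_def)
    then show "z \<in> FG G" using rest_reduced rest_letters set_drop_subset[of j rest]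
      by (auto simp: FG_iff reduced_drop)
  qed
  moreover have "T \<subseteq> FG G" unfolding T_def using B_subset Omega_FG[OF xi_Omega] W_FG by (intro rtrans_FG) auto
  ultimately show ?thesis by (auto simp: S_def)
qed

lemma Nil_in_S: "[] \<in> S" using Omega_Nil[OF xi'_Omega] by (simp add: S_def B'_def mem_ball_n)

lemma drop_rest_S: "drop j rest \<in> S"
proof (cases "j \<le> length \<alpha>")
  case True then show ?thesis by (auto simp: S_def Q_def)
next
  case False
  then have "drop j rest = drop (j - length \<alpha>) \<beta>'" by (simp add: rest_def)
  moreover have "drop (j - length \<alpha>) \<beta>' \<in> B'" using Omega_drop[OF xi'_Omega beta'_in] beta'_length by (simp add: B'_def mem_ball_n)
  ultimately show ?thesis by (simp add: S_def)
qed

lemma drop_W_S: "drop j W \<in> S"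
proof (cases "j \<le> n")
  case True
  let ?i = "n - j"
  have y: "drop ?i \<beta> \<in> B" using Omega_drop[OF xi_Omega beta_in] beta_length by (simp add: B_def mem_ball_n)
  have "red (drop ?i \<beta> @ W) = red (drop ?i \<beta> @ winv \<beta>) @ rest" using T_form(1)[OF y] .
  also have "red (drop ?i \<beta> @ winv \<beta>) = winv (take ?i \<beta>)" using red_drop_winv[OF beta_reduced] .
  also have "winv (take ?i \<beta>) = drop j (winv \<beta>)"
  proof -
    have "winv \<beta> = winv (drop ?i \<beta>) @ winv (take ?i \<beta>)" by (metis append_take_drop_id winv_append)
    moreover have "length (winv (drop ?i \<beta>)) = j" using beta_length True by simp
    ultimately show ?thesis by (metis append_eq_conv_conj)
  qed
  finally have "red (drop ?i \<beta> @ W) = drop j W" using True beta_length by (simp add: W_def)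
  moreover have "red (drop ?i \<beta> @ W) \<in> T" unfolding T_def using y by (rule red_mem_rtrans)
  ultimately show ?thesis by (simp add: S_def)
next
  case False
  then have "drop j W = drop (j - n) rest" using beta_length by (simp add: W_def)
  then show ?thesis using drop_rest_S by simp
qed

lemma drop_in_S: "z \<in> S \<Longrightarrow> drop k z \<in> S"
proof -
  assume "z \<in> S"
  then consider "z \<in> B'" | "z \<in> Q" | "z \<in> T" by (auto simp: S_def)
  then show ?thesis
  proof cases
    case 1 then show ?thesis using Omega_drop[OF xi'_Omega] by (auto simp: S_def B'_def mem_ball_n)
  next
    case 2 then show ?thesis using drop_rest_S by (auto simp: Q_def)
  next
    case 3
    then obtain y where y: "y \<in> B" "z = red (y @ W)" by (auto simp: T_def rtrans_def)
    have yr: "reduced y" using B_reduced y(1) by blast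
    from drop_red_append[OF yr W_reduced, of k] show ?thesis
    proof (elim disjE exE)
      fix j assume "drop k (red (y @ W)) = red (drop j y @ W)"
      moreover have "drop j y \<in> B" using y(1) Omega_drop[OF xi_Omega] by (auto simp: B_def mem_ball_n)
      ultimately show ?thesis using y(2) by (auto simp: S_def T_def intro: red_mem_rtrans)
    next
      fix j assume "drop k (red (y @ W)) = drop j W"
      then show ?thesis using y(2) drop_W_S by simp
    qed
  qed
qed

lemma xi_at_S_B':
  assumes z: "z \<in> B'" and t: "\<tau> \<in> xi_at G S z"
  shows "\<tau> \<in> xi_at G B' z \<or> (z = \<beta>' \<and> \<tau> = a)"
proof (rule ccontr)
  assume nt: "\<not> (\<tau> \<in> xi_at G B' z \<or> (z = \<beta>' \<and> \<tau> = a))"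
  have tl: "\<tau> \<in> letters G" and e: "wmult [\<tau>] z \<in> S" using t by (auto simp: xi_at_iff)
  have zr: "reduced z" using B'_reduced z by blast
  have zl: "length z \<le> m" using z by (simp add: B'_def mem_ball_n)
  have nB: "wmult [\<tau>] z \<notin> B'" using nt tl by (auto simp: xi_at_iff)
  then have "wmult [\<tau>] z \<in> Q \<union> T" using e by (simp add: S_def)
  then obtain v where v: "wmult [\<tau>] z = v @ \<beta>'" "v = [] \<or> last v = a" using QT_form by blast
  have "v \<noteq> []" using v nB beta'_in beta'_length by (auto simp: B'_def mem_ball_n)
  have len: "length (wmult [\<tau>] z) \<le> Suc m" using length_wmult[OF zr, of \<tau>] zl by simp
  then have "length v = 1" using v(1) beta'_length \<open>v \<noteq> []\<close> by (cases v) auto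
  then have va: "v = [a]" using v(2) by (cases v) auto
  show False
  proof (cases rule: wmult_cases[OF zr, of \<tau>])
    case 1
    then have "length (wmult [\<tau>] z) < m + 1" using zl by simp
    then show False using v(1) va beta'_length by simp
  next
    case 2
    then have "\<tau> # z = a # \<beta>'" using v(1) va by simp
    then show False using nt by simp
  qed
qed

lemma xi_at_B'_subset_S: "z \<in> B' \<Longrightarrow> length z < m \<Longrightarrow> xi_at G \<xi>' z \<subseteq> xi_at G S z"
proof
  fix \<tau> assume z: "z \<in> B'" "length z < m" and t: "\<tau> \<in> xi_at G \<xi>' z"
  have zr: "reduced z" using B'_reduced z by blast
  have "length (wmult [\<tau>] z) \<le> m" using length_wmult[OF zr, of \<tau>] z(2) by simp
  then have "wmult [\<tau>] z \<in> B'" using t by (simp add: xi_at_iff B'_def mem_ball_n)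
  then show "\<tau> \<in> xi_at G S z" using t by (simp add: xi_at_iff S_def)
qed

lemma xi_at_S_T:
  assumes y: "y \<in> B" and t: "\<tau> \<in> xi_at G S (red (y @ W))"
  shows "\<tau> \<in> xi_at G B y \<or> (y = \<beta> \<and> \<tau> = linv (hd rest))"
proof -
  let ?z = "red (y @ W)"
  have xT: "xi_at G T ?z = xi_at G B y" unfolding T_def using xi_at_rtrans[OF B_reduced] .
  have tl: "\<tau> \<in> letters G" and e: "wmult [\<tau>] ?z \<in> S" using t by (auto simp: xi_at_iff)
  obtain u where u: "?z = u @ rest" "u = [] \<or> last u = linv (hd \<beta>)" "u = [] \<longleftrightarrow> y = \<beta>"
    using T_form[OF y] by blast
  have zr: "reduced ?z" by simp
  show ?thesis
  proof (cases "wmult [\<tau>] ?z \<in> T")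
    case True then show ?thesis using xT tl by (auto simp: xi_at_iff)
  next
    case False
    then have eBQ: "wmult [\<tau>] ?z \<in> B' \<union> Q" using e by (simp add: S_def)
    have le: "length (wmult [\<tau>] ?z) \<le> length rest"
      using eBQ length_Q length_rest by (auto simp: B'_def mem_ball_n)
    show ?thesis
    proof (cases rule: wmult_cases[OF zr, of \<tau>])
      case 2 then show ?thesis using le u(1) by simp
    next
      case 1
      show ?thesis
      proof (cases "u = []")
        case True
        then show ?thesis using 1 u by simp
      next
        case False
        have "length (tl ?z) \<le> length rest" using le 1 by simp
        then have "length u = 1" using u(1) False by (cases u) auto
        then have "u = [linv (hd \<beta>)]" using u(2) by (cases u) auto
        then have "wmult [\<tau>] ?z = rest" using 1 u(1) by simp
        then have "\<tau> \<in> xi_at G T ?z" using rest_in_T tl by (simp add: xi_at_iff)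
        then show ?thesis using xT by simp
      qed
    qed
  qed
qed

lemma xi_at_B_subset_S: "y \<in> B \<Longrightarrow> xi_at G B y \<subseteq> xi_at G S (red (y @ W))"
proof -
  assume y: "y \<in> B"
  have "xi_at G T (red (y @ W)) = xi_at G B y" unfolding T_def using xi_at_rtrans[OF B_reduced] .
  then show ?thesis using xi_at_mono[of T S] by (auto simp: S_def)
qed

lemma xi_at_S_Q:
  assumes j: "0 < j" "j < length \<alpha>" and t: "\<tau> \<in> xi_at G S (drop j rest)"
  shows "\<tau> = linv (hd (drop j rest)) \<or> \<tau> = \<alpha> ! (j - 1)"
proof -
  let ?z = "drop j rest"
  have zr: "reduced ?z" using reduced_drop[OF rest_reduced] .
  have e: "wmult [\<tau>] ?z \<in> S" using t by (simp add: xi_at_iff)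
  show ?thesis
  proof (cases rule: wmult_cases[OF zr, of \<tau>])
    case 1 then show ?thesis by simp
  next
    case 2
    have lz: "length (\<tau> # ?z) = length rest - j + 1" using j length_rest by simp
    have "\<tau> # ?z \<notin> B'" using lz j length_rest by (auto simp: B'_def mem_ball_n)
    then consider "\<tau> # ?z \<in> Q" | "\<tau> # ?z \<in> T" using e 2 by (auto simp: S_def)
    then show ?thesis
    proof cases
      case 1
      then obtain j' where j': "\<tau> # ?z = drop j' rest" by (auto simp: Q_def)
      have "length rest - j' = length rest - j + 1" using arg_cong[OF j', of length] lz by simp
      then have "j' = j - 1" using j length_rest by arith
      then have "\<tau> # ?z = drop (j - 1) rest" using j' by simp
      also have "\<dots> = rest ! (j - 1) # drop j rest" using Cons_nth_drop_Suc[of "j - 1" rest] j length_rest by simp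
      finally have "\<tau> = rest ! (j - 1)" by simp
      moreover have "rest ! (j - 1) = \<alpha> ! (j - 1)" using j unfolding rest_def by (intro nth_append_left) simp
      ultimately show ?thesis by simp
    next
      case 2
      then have "length rest \<le> length (\<tau> # ?z)" by (rule length_T)
      then have j1: "j = 1" using lz j length_rest by simp
      obtain y u where h: "\<tau> # ?z = u @ rest" "u = [] \<or> last u = linv (hd \<beta>)" using T_elem[OF 2] by blast
      have "length u = 0" using arg_cong[OF h(1), of length] lz j1 length_rest j by (simp del: length_0_conv; arith)
      then have "u = []" by simp
      then have "\<tau> # drop 1 rest = rest" using h(1) j1 by simp
      then have "\<tau> = hd rest" by (metis list.sel(1))
      moreover have "hd rest = \<alpha> ! 0" using j unfolding rest_def by (cases \<alpha>) auto
      ultimately show ?thesis using j1 by simp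
    qed
  qed
qed

lemma link_letter: "i < length \<alpha> + 2 \<Longrightarrow> link ! i \<in> letters G"
  using admissible_letters[OF admissible_link]
  by (metis length_Cons length_append_singleton add_2_eq_Suc' nth_mem subsetD)

lemma link_pair_local:
  assumes "i \<le> length \<alpha>" "X \<subseteq> {linv (link ! Suc i), link ! i}"
  shows "\<exists>A. local_ok G A \<and> X \<subseteq> A"
proof -
  have "adm_pair G (link ! i) (link ! Suc i)" using admissible_nth[OF admissible_link] assms(1) by simp
  moreover have "i < length \<alpha> + 2" "Suc i < length \<alpha> + 2" using assms(1) by simp_all
  then have "link ! i \<in> letters G" "link ! Suc i \<in> letters G" using link_letter by blast+
  ultimately obtain A where "local_ok G A" "linv (link ! Suc i) \<in> A" "link ! i \<in> A"
    using local_ok_pair by blast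
  then show ?thesis using assms(2) by blast
qed

lemma T_locally_extendable:
  assumes "z \<in> T"
  shows "\<exists>A. local_ok G A \<and> xi_at G S z \<subseteq> A"
proof -
  obtain y where y: "y \<in> B" "z = red (y @ W)" using assms by (auto simp: T_def rtrans_def)
  show ?thesis
  proof (cases "y = \<beta>")
    case False
    then have "xi_at G S z \<subseteq> xi_at G \<xi> y"
      using xi_at_S_T[OF y(1)] y(2) xi_at_mono[OF B_subset] by blast
    then show ?thesis using Omega_local[OF xi_Omega] y(1) B_subset by blast
  next
    case True
    have "hd rest = link ! 1" unfolding rest_def using beta'_ne by (cases \<alpha>) auto
    have "xi_at G S z \<subseteq> {linv (link ! 1), link ! 0}"
    proof
      fix \<tau> assume "\<tau> \<in> xi_at G S z"
      then have "\<tau> \<in> xi_at G B \<beta> \<or> \<tau> = linv (hd rest)" using xi_at_S_T[OF y(1)] y(2) True by blast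
      moreover have "\<tau> = linv (hd \<beta>)" if "\<tau> \<in> xi_at G B \<beta>"
        using xi_at_ball_n_full[OF beta_reduced beta_length] that by (simp add: B_def)
      ultimately show "\<tau> \<in> {linv (link ! 1), link ! 0}" using \<open>hd rest = link ! 1\<close> by auto
    qed
    then show ?thesis using link_pair_local[of 0] by simp
  qed
qed

lemma B'_locally_extendable:
  assumes "z \<in> B'"
  shows "\<exists>A. local_ok G A \<and> xi_at G S z \<subseteq> A"
proof (cases "z = \<beta>'")
  case False
  then have "xi_at G S z \<subseteq> xi_at G \<xi>' z" using xi_at_S_B'[OF assms] xi_at_mono[OF B'_subset] by blast
  then show ?thesis using Omega_local[OF xi'_Omega] assms B'_subset by blast
next
  case True
  have "a = link ! length \<alpha>"
    unfolding a_def by (cases "\<alpha> = []") (auto simp: nth_append last_conv_nth nth_Cons')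
  moreover have "xi_at G S z \<subseteq> {linv (hd \<beta>'), a}"
  proof
    fix \<tau> assume "\<tau> \<in> xi_at G S z"
    then have "\<tau> \<in> xi_at G B' \<beta>' \<or> \<tau> = a" using xi_at_S_B'[OF assms] True by blast
    then show "\<tau> \<in> {linv (hd \<beta>'), a}"
      using xi_at_ball_n_full[OF beta'_reduced beta'_length] unfolding B'_def by blast
  qed
  ultimately show ?thesis using link_pair_local[of "length \<alpha>"] by (simp add: nth_append)
qed

lemma S_locally_extendable:
  assumes "z \<in> S"
  shows "\<exists>A. local_ok G A \<and> xi_at G S z \<subseteq> A"
proof -
  have "z \<in> B' \<or> z \<in> T \<or> (\<exists>j\<le>length \<alpha>. z = drop j rest)" using assms by (auto simp: S_def Q_def)
  then consider "z \<in> B'" | "z \<in> T" | "z = rest" | "z = \<beta>'"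
    | j where "z = drop j rest" "0 < j" "j < length \<alpha>"
    by (metis drop_0 le_neq_implies_less neq0_conv append_eq_conv_conj rest_def)
  then show ?thesis
  proof cases
    case 5
    have "xi_at G S z \<subseteq> {linv (hd z), \<alpha> ! (j - 1)}" using xi_at_S_Q 5 by blast
    moreover have "hd z = link ! Suc j" "\<alpha> ! (j - 1) = link ! j"
      using 5 by (auto simp: rest_def hd_drop_conv_nth nth_append nth_Cons')
    ultimately show ?thesis using link_pair_local[of j] 5 by simp
  qed (use B'_locally_extendable T_locally_extendable rest_in_T beta'_in beta'_length in
    \<open>auto simp: B'_def mem_ball_n\<close>)
qed

lemma glued_configuration:
  obtains \<eta> where "\<eta> \<in> Omega G" "S \<subseteq> \<eta>"
    "\<And>z. z \<in> S \<Longrightarrow> local_ok G (xi_at G S z) \<Longrightarrow> xi_at G \<eta> z = xi_at G S z"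
proof -
  obtain \<eta> where "\<eta> \<in> Omega G" "S \<subseteq> \<eta>"
    "\<forall>z\<in>S. local_ok G (xi_at G S z) \<longrightarrow> xi_at G \<eta> z = xi_at G S z"
    using Omega_extension[OF S_FG Nil_in_S drop_in_S S_locally_extendable] by blast
  then show ?thesis using that by blast
qed

lemma ball_n_glued_B':
  assumes eta: "\<eta> \<in> Omega G" "S \<subseteq> \<eta>"
    and loc: "\<And>z. z \<in> S \<Longrightarrow> local_ok G (xi_at G S z) \<Longrightarrow> xi_at G \<eta> z = xi_at G S z"
  shows "ball_n m \<eta> = ball_n m \<xi>'"
proof (rule ball_n_eqI[OF eta(1) xi'_Omega])
  show "ball_n m \<xi>' \<subseteq> \<eta>" using eta(2) by (auto simp: S_def B'_def)
  fix y assume y: "y \<in> ball_n m \<xi>'" "length y < m"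
  have yB: "y \<in> B'" using y by (simp add: B'_def)
  have "xi_at G S y = xi_at G \<xi>' y"
  proof
    show "xi_at G S y \<subseteq> xi_at G \<xi>' y"
      using xi_at_S_B'[OF yB] y(2) beta'_length xi_at_mono[OF B'_subset] by blast
    show "xi_at G \<xi>' y \<subseteq> xi_at G S y" using xi_at_B'_subset_S[OF yB y(2)] .
  qed
  then show "xi_at G \<eta> y = xi_at G \<xi>' y"
    using loc[of y] yB Omega_local[OF xi'_Omega] y by (simp add: S_def mem_ball_n)
qed

lemma ball_n_glued_B:
  assumes eta: "\<eta> \<in> Omega G" "S \<subseteq> \<eta>"
    and loc: "\<And>z. z \<in> S \<Longrightarrow> local_ok G (xi_at G S z) \<Longrightarrow> xi_at G \<eta> z = xi_at G S z"
  shows "ball_n n (rtrans \<eta> (winv W)) = ball_n n \<xi>"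
proof -
  have etared: "\<forall>b\<in>\<eta>. reduced b" using Omega_reduced[OF eta(1)] by blast
  have "winv W \<in> FG G" using W_FG by (auto simp: FG_iff set_winv)
  moreover have "W \<in> \<eta>" using W_in_T eta(2) unfolding S_def by blast
  ultimately have xO: "rtrans \<eta> (winv W) \<in> Omega G" using rtrans_Omega[OF eta(1)] by simp
  show ?thesis
  proof (rule ball_n_eqI[OF xO xi_Omega])
    show "ball_n n \<xi> \<subseteq> rtrans \<eta> (winv W)"
    proof
      fix y assume "y \<in> ball_n n \<xi>"
      then have "reduced y" "red (y @ W) \<in> T"
        using B_reduced red_mem_rtrans[of y B W] by (auto simp: T_def B_def)
      then show "y \<in> rtrans \<eta> (winv W)" using eta(2) mem_rtrans[OF etared] by (auto simp: S_def)
    qed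
    fix y assume y: "y \<in> ball_n n \<xi>" "length y < n"
    have yB: "y \<in> B" using y by (simp add: B_def)
    have yr: "reduced y" using B_reduced yB by blast
    let ?z = "red (y @ W)"
    have zS: "?z \<in> S" using yB by (simp add: S_def T_def red_mem_rtrans)
    have "red (?z @ winv W) = y" using yr by (simp add: red_append_red_left red_cancel_right red_id)
    then have "xi_at G (rtrans \<eta> (winv W)) y = xi_at G \<eta> ?z"
      using xi_at_rtrans[OF etared, of G "winv W" ?z] by simp
    moreover have "xi_at G S ?z = xi_at G \<xi> y"
    proof
      have "y \<noteq> \<beta>" using y(2) beta_length by auto
      then show "xi_at G S ?z \<subseteq> xi_at G \<xi> y" using xi_at_S_T[OF yB] xi_at_mono[OF B_subset] by blast
      have "xi_at G \<xi> y \<subseteq> xi_at G B y"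
      proof
        fix \<tau> assume "\<tau> \<in> xi_at G \<xi> y"
        moreover have "length (wmult [\<tau>] y) \<le> n" using length_wmult[OF yr, of \<tau>] y(2) by simp
        ultimately show "\<tau> \<in> xi_at G B y" by (simp add: xi_at_iff B_def mem_ball_n)
      qed
      then show "xi_at G \<xi> y \<subseteq> xi_at G S ?z" using xi_at_B_subset_S[OF yB] by blast
    qed
    moreover have "local_ok G (xi_at G \<xi> y)" using Omega_local[OF xi_Omega] yB B_subset by blast
    ultimately show "xi_at G (rtrans \<eta> (winv W)) y = xi_at G \<xi> y" using loc[OF zS] by simp
  qed
qed

lemma linked_balls_orbit:
  "\<exists>g x. g \<in> FG G \<and> x \<in> Omega G \<and> g \<in> x \<and> ball_n n x = ball_n n \<xi> \<and>
     theta g x \<in> Omega G \<and> ball_n m (theta g x) = ball_n m \<xi>'"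
proof -
  obtain \<eta> where eta: "\<eta> \<in> Omega G" "S \<subseteq> \<eta>"
    and loc: "\<And>z. z \<in> S \<Longrightarrow> local_ok G (xi_at G S z) \<Longrightarrow> xi_at G \<eta> z = xi_at G S z"
    using glued_configuration by blast
  define x where "x = rtrans \<eta> (winv W)"
  have hFG: "winv W \<in> FG G" using W_FG by (auto simp: FG_iff set_winv)
  have "W \<in> \<eta>" using W_in_T eta(2) unfolding S_def by blast
  then have "x \<in> Omega G" unfolding x_def using rtrans_Omega[OF eta(1) hFG] by simp
  moreover have "winv W \<in> x"
    unfolding x_def using red_mem_rtrans[OF Omega_Nil[OF eta(1)], of "winv W"] hFG
    by (simp add: red_id FG_iff)
  moreover have "theta (winv W) x = \<eta>"
    unfolding theta_rtrans x_def using rtrans_rtrans[of \<eta> "winv W"] Omega_reduced[OF eta(1)] by simp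
  ultimately show ?thesis
    using hFG eta(1) ball_n_glued_B[OF eta loc] ball_n_glued_B'[OF eta loc] unfolding x_def by metis
qed

end

section \<open>Linking Property and transitivity\<close>

context fin_bip
begin

lemma boundary_iff: "\<sigma> \<in> boundary G B \<longleftrightarrow> (\<exists>\<beta>. maximal_in G B \<beta> \<and> \<beta> \<noteq> [] \<and> \<sigma> = hd \<beta>)"
  by (auto simp: boundary_def)

lemma linked_boundaries_orbit:
  assumes xi: "\<xi> \<in> Omega G" and xi': "\<xi>' \<in> Omega G"
    and L: "can_be_linked G (boundary G (ball_n n \<xi>)) (boundary G (ball_n m \<xi>'))"
  shows "\<exists>g x. g \<in> FG G \<and> x \<in> Omega G \<and> g \<in> x \<and> ball_n n x = ball_n n \<xi> \<and>
     theta g x \<in> Omega G \<and> ball_n m (theta g x) = ball_n m \<xi>'"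
proof -
  obtain \<sigma> \<sigma>' \<alpha> where s: "\<sigma> \<in> boundary G (ball_n n \<xi>)" "\<sigma>' \<in> boundary G (ball_n m \<xi>')"
    and adm: "admissible G ([linv \<sigma>] @ \<alpha> @ [\<sigma>'])"
    using L unfolding can_be_linked_def by blast
  obtain \<beta> where b: "maximal_in G (ball_n n \<xi>) \<beta>" "\<beta> \<noteq> []" "\<sigma> = hd \<beta>"
    using s(1) boundary_iff by blast
  obtain \<beta>' where b': "maximal_in G (ball_n m \<xi>') \<beta>'" "\<beta>' \<noteq> []" "\<sigma>' = hd \<beta>'"
    using s(2) boundary_iff by blast
  let ?link = "linv (hd \<beta>) # \<alpha> @ [hd \<beta>']"
  have link: "admissible G ?link" using adm b(3) b'(3) by simp
  have link_letter: "?link ! i \<in> letters G" if "i < length \<alpha> + 2" for i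
    using admissible_letters[OF link] that
    by (metis length_Cons length_append_singleton add_2_eq_Suc' nth_mem subsetD)
  have "length \<beta> = n"
  proof (rule maximal_full_length[OF xi b(1) b(2)])
    show "adm_pair G (linv (hd \<beta>)) (?link ! 1)" using admissible_nth[OF link, of 0] by simp
    show "?link ! 1 \<in> letters G" using link_letter[of 1] by simp
  qed
  moreover have "length \<beta>' = m"
  proof (rule maximal_full_length[OF xi' b'(1) b'(2)])
    have "adm_pair G (?link ! length \<alpha>) (hd \<beta>')"
      using admissible_nth[OF link, of "length \<alpha>"] by (simp add: nth_append)
    then show "adm_pair G (linv (hd \<beta>')) (linv (?link ! length \<alpha>))" using adm_pair_linv by blast
    show "linv (?link ! length \<alpha>) \<in> letters G" using link_letter[of "length \<alpha>"] by simp
  qed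
  moreover have "\<beta> \<in> \<xi>" "\<beta>' \<in> \<xi>'" using b(1) b'(1) by (auto simp: maximal_in_def mem_ball_n)
  ultimately have "linked_balls G \<xi> \<xi>' \<beta> \<beta>' \<alpha> n m"
    using xi xi' b(2) b'(2) link by (unfold_locales) (simp_all add: finite_bipartite)
  then show ?thesis by (rule linked_balls.linked_balls_orbit)
qed

lemma linking_imp_transitive:
  assumes L: "linking_property G"
  shows "theta_top_transitive G"
  unfolding theta_top_transitive_def top_transitive_def
proof (intro allI impI)
  fix U U' assume U: "openin (Omega_top G) U" and U': "openin (Omega_top G) U'"
    and "U \<noteq> {}" "U' \<noteq> {}"
  then obtain \<xi> \<xi>' where x: "\<xi> \<in> U" and x': "\<xi>' \<in> U'" by (meson ex_in_conv)
  have xi: "\<xi> \<in> Omega G" and xi': "\<xi>' \<in> Omega G"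
    using openin_Omega_subset[OF U] openin_Omega_subset[OF U'] x x' by auto
  obtain n where n: "n \<ge> 1" "cyl n \<xi> \<subseteq> U" using open_contains_cyl[OF U x] by blast
  obtain m where m: "m \<ge> 1" "cyl m \<xi>' \<subseteq> U'" using open_contains_cyl[OF U' x'] by blast
  have "ball_n n \<xi> \<in> balls G" "ball_n m \<xi>' \<in> balls G" using n(1) m(1) xi xi' by (auto simp: balls_def)
  then have linked: "can_be_linked G (boundary G (ball_n n \<xi>)) (boundary G (ball_n m \<xi>'))"
    using L by (simp add: linking_property_def)
  obtain g x where g: "g \<in> FG G" "x \<in> Omega G" "g \<in> x" "ball_n n x = ball_n n \<xi>"
    "theta g x \<in> Omega G" "ball_n m (theta g x) = ball_n m \<xi>'"
    using linked_boundaries_orbit[OF xi xi' linked] by blast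
  have "x \<in> U" using g n(2) by (auto simp: cyl_def)
  moreover have "x \<in> Omega_dom G (winv g)" using g by (simp add: Omega_dom_def)
  moreover have "theta g x \<in> U'" using g m(2) by (auto simp: cyl_def)
  ultimately show "\<exists>g\<in>FG G. theta g ` (U \<inter> Omega_dom G (winv g)) \<inter> U' \<noteq> {}"
    using g(1) by blast
qed

lemma long_orbit_links:
  assumes z: "\<zeta> \<in> Omega G" "g \<in> \<zeta>" and g: "g \<in> FG G" and nm: "1 \<le> n" "1 \<le> m"
    and long: "m + n \<le> length g"
    and zb: "ball_n n \<zeta> = ball_n n \<xi>" and eb: "ball_n m (theta g \<zeta>) = ball_n m \<xi>'"
  shows "can_be_linked G (boundary G (ball_n n \<xi>)) (boundary G (ball_n m \<xi>'))"
proof -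
  define k where "k = length g"
  have gr: "reduced g" using g by (simp add: FG_iff)
  have "g \<noteq> []" using long nm by auto
  then have gadm: "admissible G g" using Omega_admissible[OF z] by blast
  define \<beta> where "\<beta> = drop (k - n) g"
  have "\<beta> \<in> ball_n n \<xi>"
    using Omega_drop[OF z] long zb by (auto simp: \<beta>_def k_def mem_ball_n ball_n_eq_mem)
  then have bmax: "maximal_in G (ball_n n \<xi>) \<beta>"
    using long by (auto simp: maximal_in_def mem_ball_n \<beta>_def k_def)
  have hb: "hd \<beta> = g ! (k - n)" using long nm by (simp add: \<beta>_def k_def hd_drop_conv_nth)
  define \<beta>' where "\<beta>' = winv (take m g)"
  have "red (\<beta>' @ g) = drop m g"
    using red_cancel'[of "take m g" "drop m g"] reduced_drop[OF gr] by (simp add: \<beta>'_def red_id)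
  then have "\<beta>' \<in> theta g \<zeta>"
    using mem_theta[OF Omega_FG[OF z(1)]] Omega_drop[OF z] reduced_take[OF gr] by (simp add: \<beta>'_def)
  then have "\<beta>' \<in> ball_n m \<xi>'" using eb long by (auto simp: \<beta>'_def mem_ball_n ball_n_eq_mem)
  then have b'max: "maximal_in G (ball_n m \<xi>') \<beta>'"
    using long by (auto simp: maximal_in_def mem_ball_n \<beta>'_def)
  have "take m g \<noteq> []" using long nm by auto
  then have hb': "hd \<beta>' = linv (g ! (m - 1))"
    using long nm by (simp add: \<beta>'_def hd_winv last_conv_nth)
  define c where "c = k - n - m"
  define \<alpha> where "\<alpha> = winv (take c (drop m g))"
  have split: "take (Suc (Suc c)) (drop (m - 1) g) = g ! (m - 1) # take c (drop m g) @ [g ! (k - n)]"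
  proof -
    have "drop (m - 1) g = g ! (m - 1) # drop m g"
      using Cons_nth_drop_Suc[of "m - 1" g] long nm by simp
    moreover have "take (Suc c) (drop m g) = take c (drop m g) @ [g ! (k - n)]"
      using take_Suc_conv_app_nth[of c "drop m g"] long nm by (simp add: c_def k_def)
    ultimately show ?thesis by simp
  qed
  have "admissible G (take (Suc (Suc c)) (drop (m - 1) g))"
    using admissible_take_drop[OF gadm] long nm by (simp add: c_def k_def)
  then have "admissible G ([linv (hd \<beta>)] @ \<alpha> @ [hd \<beta>'])"
    using admissible_winv split hb hb' by (fastforce simp: \<alpha>_def)
  moreover have "\<alpha> = [] \<or> admissible G \<alpha>"
    using admissible_take_drop[OF gadm, of c m] admissible_winv long by (cases "c = 0") (auto simp: \<alpha>_def c_def k_def)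
  moreover have "hd \<beta> \<in> boundary G (ball_n n \<xi>)" "hd \<beta>' \<in> boundary G (ball_n m \<xi>')"
    using bmax b'max long nm boundary_iff by (auto simp: \<beta>_def \<beta>'_def k_def)
  ultimately show ?thesis unfolding can_be_linked_def by blast
qed

lemma orbit_word_long:
  assumes xi: "\<xi> \<in> Omega G" and z: "\<zeta> \<in> Omega G" "g \<in> \<zeta>" and g: "g \<in> FG G"
    and zb: "ball_n (N + k) \<zeta> = ball_n (N + k) \<xi>" and eb: "ball_n N (theta g \<zeta>) = ball_n N \<xi>1"
    and avoid: "cyl N \<xi>1 \<inter> (\<lambda>g. theta g \<xi>) ` {g \<in> \<xi>. length g < k} = {}"
  shows "k \<le> length g"
proof (rule ccontr)
  assume short: "\<not> k \<le> length g"
  then have "g \<in> \<xi>" using ball_n_eq_mem[OF zb, of g] z(2) by simp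
  moreover have "theta g \<xi> \<in> Omega G"
    using rtrans_Omega[OF xi, of "winv g"] g \<open>g \<in> \<xi>\<close>
    by (auto simp: theta_rtrans FG_iff set_winv image_subset_iff)
  moreover have "ball_n N (theta g \<zeta>) = ball_n N (theta g \<xi>)"
    using ball_n_theta_eq[OF Omega_FG[OF z(1)] Omega_FG[OF xi]] ball_n_eq_mono[OF _ zb] short by simp
  ultimately show False using avoid short eb by (auto simp: cyl_def)
qed

lemma transitive_imp_linking:
  assumes NI: "no_isolated_points (Omega_top G)" and T: "theta_top_transitive G"
  shows "linking_property G"
  unfolding linking_property_def
proof (intro ballI)
  fix B B' assume "B \<in> balls G" "B' \<in> balls G"
  then obtain n \<xi> m \<xi>' where B: "B = ball_n n \<xi>" "n \<ge> 1" "\<xi> \<in> Omega G"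
    and B': "B' = ball_n m \<xi>'" "m \<ge> 1" "\<xi>' \<in> Omega G" by (auto simp: balls_def)
  define F where "F = (\<lambda>g. theta g \<xi>) ` {g \<in> \<xi>. length g < m + n}"
  have "{g \<in> \<xi>. length g < m + n} \<subseteq> {w \<in> FG G. length w \<le> m + n}"
    using Omega_FG[OF B(3)] by auto
  then have "finite F" unfolding F_def using finite_subset[OF _ finite_short_words] by blast
  obtain K where K: "cyl K \<xi>' \<inter> (F - {\<xi>'}) = {}"
    using cyl_avoids_finite[of "F - {\<xi>'}" \<xi>'] \<open>finite F\<close> by blast
  obtain \<xi>1 where x1: "\<xi>1 \<in> cyl (max m K) \<xi>'" "\<xi>1 \<noteq> \<xi>'"
    using cyl_not_singleton[OF NI B'(3)] by blast
  have x1O: "\<xi>1 \<in> Omega G" and x1m: "ball_n m \<xi>1 = ball_n m \<xi>'"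
    using x1(1) cyl_mono[of m "max m K" \<xi>'] by (auto simp: cyl_def)
  have "\<xi>1 \<notin> F" using x1 K cyl_mono[of K "max m K" \<xi>'] by auto
  then obtain N0 where N0: "cyl N0 \<xi>1 \<inter> F = {}" using cyl_avoids_finite \<open>finite F\<close> by blast
  define N where "N = N0 + m + n"
  have "cyl N \<xi> \<noteq> {}" "cyl N \<xi>1 \<noteq> {}" using cyl_self[OF B(3)] cyl_self[OF x1O] by blast+
  with T obtain g where g: "g \<in> FG G"
    and "theta g ` (cyl N \<xi> \<inter> Omega_dom G (winv g)) \<inter> cyl N \<xi>1 \<noteq> {}"
    using openin_cyl[OF B(3)] openin_cyl[OF x1O]
    unfolding theta_top_transitive_def top_transitive_def by meson
  then obtain \<zeta> where z: "\<zeta> \<in> cyl N \<xi>" "g \<in> \<zeta>" "theta g \<zeta> \<in> cyl N \<xi>1"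
    by (auto simp: Omega_dom_def)
  have zO: "\<zeta> \<in> Omega G" and zN: "ball_n N \<zeta> = ball_n N \<xi>" using z(1) by (auto simp: cyl_def)
  have eN: "ball_n N (theta g \<zeta>) = ball_n N \<xi>1" using z(3) by (simp add: cyl_def)
  have "ball_n (N0 + (m + n)) \<zeta> = ball_n (N0 + (m + n)) \<xi>" using zN by (simp add: N_def add.assoc)
  moreover have "ball_n N0 (theta g \<zeta>) = ball_n N0 \<xi>1" using ball_n_eq_mono[OF _ eN] by (simp add: N_def)
  ultimately have long: "m + n \<le> length g"
    using orbit_word_long[OF B(3) zO z(2) g] N0 unfolding F_def by blast
  have "ball_n n \<zeta> = ball_n n \<xi>" using ball_n_eq_mono[OF _ zN] by (simp add: N_def)
  moreover have "ball_n m (theta g \<zeta>) = ball_n m \<xi>'"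
    using ball_n_eq_mono[OF _ eN, of m] x1m by (simp add: N_def)
  ultimately show "can_be_linked G (boundary G B) (boundary G B')"
    using long_orbit_links[OF zO z(2) g B(2) B'(2) long] B(1) B'(1) by blast
qed

end

theorem lemma9:
  fixes G :: "('v, 'e) sep_graph"
  assumes "finite_bipartite G"
  shows "(linking_property G \<longrightarrow> theta_top_transitive G) \<and>
         (no_isolated_points (Omega_top G) \<longrightarrow> theta_top_transitive G \<longrightarrow> linking_property G)"
proof -
  interpret fin_bip G using assms by unfold_locales
  show ?thesis using linking_imp_transitive transitive_imp_linking by blast
qed

end
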